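(* Let $G$ be an $F_3$-free graph with $m\ge 33$ edges. Then \[ \lambda(G)\le 1+\sqrt{m-2}, \] and equality holds if and only if $G = K_3\vee \frac{m-3}{3}K_1$ (up to isolated vertices).
   Context: All graphs are finite and simple. $\lambda(G)$ denotes the spectral radius of the adjacency matrix of $G$. The friendship graph $F_k$ consists of $k$ triangles sharing exactly one common vertex (so $F_3$ has 7 vertices and 9 edges). $tK_1$ is the edgeless graph on $t$ vertices and $G\vee H$ is the join of $G$ and $H$. A graph is $F$-free if it contains no subgraph isomorphic to $F$. The graph $K_3\vee\frac{m-3}{3}K_1$ (which exists when $3\mid m$) has exactly $m$ edges. *)

theory Defs
  imports "Jordan_Normal_Form.Spectral_Radius"
begin

definition simple_graph :: "nat \<Rightarrow> (nat \<Rightarrow> nat \<Rightarrow> bool) \<Rightarrow> bool" where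
  "simple_graph n E \<longleftrightarrow>
     (\<forall>i j. E i j \<longrightarrow> i < n \<and> j < n) \<and>
     (\<forall>i j. E i j \<longrightarrow> E j i) \<and>
     (\<forall>i. \<not> E i i)"

definition num_edges :: "nat \<Rightarrow> (nat \<Rightarrow> nat \<Rightarrow> bool) \<Rightarrow> nat" where
  "num_edges n E = card {{i, j} | i j. i < n \<and> j < n \<and> E i j}"

definition adj_mat :: "nat \<Rightarrow> (nat \<Rightarrow> nat \<Rightarrow> bool) \<Rightarrow> complex mat" where
  "adj_mat n E = mat n n (\<lambda>(i, j). if E i j then 1 else 0)"

definition graph_spectral_radius :: "nat \<Rightarrow> (nat \<Rightarrow> nat \<Rightarrow> bool) \<Rightarrow> real" where
  "graph_spectral_radius n E = spectral_radius (adj_mat n E)"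

definition contains_subgraph ::
  "nat \<Rightarrow> (nat \<Rightarrow> nat \<Rightarrow> bool) \<Rightarrow> nat \<Rightarrow> (nat \<Rightarrow> nat \<Rightarrow> bool) \<Rightarrow> bool" where
  "contains_subgraph nG EG nH EH \<longleftrightarrow>
     (\<exists>f. inj_on f {..<nH} \<and> f ` {..<nH} \<subseteq> {..<nG} \<and>
          (\<forall>i<nH. \<forall>j<nH. EH i j \<longrightarrow> EG (f i) (f j)))"

definition friendship_edge :: "nat \<Rightarrow> nat \<Rightarrow> nat \<Rightarrow> bool" where
  "friendship_edge k i j \<longleftrightarrow> i \<le> 2*k \<and> j \<le> 2*k \<and> i \<noteq> j \<and>
     (i = 0 \<or> j = 0 \<or> (\<exists>t. 1 \<le> t \<and> t \<le> k \<and> {i, j} = {2*t - 1, 2*t}))"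

definition F_free :: "nat \<Rightarrow> nat \<Rightarrow> (nat \<Rightarrow> nat \<Rightarrow> bool) \<Rightarrow> bool" where
  "F_free k n E \<longleftrightarrow> \<not> contains_subgraph n E (2*k + 1) (friendship_edge k)"

definition K3_join_edge :: "nat \<Rightarrow> nat \<Rightarrow> nat \<Rightarrow> bool" where
  "K3_join_edge t i j \<longleftrightarrow> i < t + 3 \<and> j < t + 3 \<and> i \<noteq> j \<and> (i < 3 \<or> j < 3)"

definition non_isolated :: "nat \<Rightarrow> (nat \<Rightarrow> nat \<Rightarrow> bool) \<Rightarrow> nat set" where
  "non_isolated n E = {i. i < n \<and> (\<exists>j<n. E i j)}"

definition iso_up_to_isolated ::
  "nat \<Rightarrow> (nat \<Rightarrow> nat \<Rightarrow> bool) \<Rightarrow> nat \<Rightarrow> (nat \<Rightarrow> nat \<Rightarrow> bool) \<Rightarrow> bool" where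
  "iso_up_to_isolated nG EG nH EH \<longleftrightarrow>
     (\<exists>f. bij_betw f (non_isolated nG EG) (non_isolated nH EH) \<and>
          (\<forall>i\<in>non_isolated nG EG. \<forall>j\<in>non_isolated nG EG. EG i j \<longleftrightarrow> EH (f i) (f j)))"

end

theory Submission
  imports Defs "HOL-Analysis.Convex"
begin

text \<open>
  Let \<open>x\<close> be the Perron vector of \<open>G\<close>, scaled to have maximum \<open>1\<close> at a vertex \<open>u\<close>, let \<open>r\<close> be the
  spectral radius and \<open>N\<close> the neighbourhood of \<open>u\<close>. Expanding \<open>r\<^sup>2 = (\<Sum>v\<in>N. r * x v)\<close> and counting
  edges around \<open>u\<close> shows that \<open>2 (r\<^sup>2 - 2 r - (m - 3))\<close> is the sum of \<open>x v + x w - 1\<close> over the edges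
  \<open>v w\<close> inside \<open>N\<close> (in both directions) minus \<open>4 (\<Sum>v\<in>N. x v) - 6\<close>, minus nonnegative contributions
  of the edges leaving \<open>N\<close> and of the edges away from \<open>u\<close>. As \<open>G\<close> is \<open>F\<^sub>3\<close>-free, \<open>N\<close> spans no three
  disjoint edges, and a case analysis on two disjoint edges shows that the first difference is
  nonpositive once \<open>(\<Sum>v\<in>N. x v) = r > 13/2\<close>, vanishing only when \<open>N\<close> spans a book whose two spine
  vertices have weight \<open>1\<close>. Hence \<open>(r - 1)\<^sup>2 \<le> m - 2\<close>. In the equality case this book structure at every
  vertex of weight \<open>1\<close>, together with \<open>F\<^sub>3\<close>-freeness, forces \<open>G = K\<^sub>3 \<or> tK\<^sub>1\<close> up to isolated vertices;
  conversely that graph has an explicit eigenvector for \<open>1 + sqrt (3 t + 1)\<close>.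

  The spectral radius in the statement is that of the complex adjacency matrix; the Rayleigh bound
  and the nonnegative Perron vector are derived from it through the growth of matrix powers.
\<close>

section \<open>Spectral facts for real symmetric matrices\<close>

definition real_mat :: "nat \<Rightarrow> (nat \<Rightarrow> nat \<Rightarrow> real) \<Rightarrow> complex mat" where
  "real_mat n M = mat n n (\<lambda>(i, j). complex_of_real (M i j))"

lemma real_mat_carrier [simp]: "real_mat n M \<in> carrier_mat n n"
  unfolding real_mat_def by auto

lemma real_mat_dim [simp]: "dim_row (real_mat n M) = n" "dim_col (real_mat n M) = n"
  unfolding real_mat_def by auto

lemma real_mat_mult_vec_index:
  assumes "v \<in> carrier_vec n" "i < n"
  shows "(real_mat n M *\<^sub>v v) $ i = (\<Sum>j<n. complex_of_real (M i j) * v $ j)"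
  using assms unfolding real_mat_def
  by (simp add: index_mult_mat_vec row_def scalar_prod_def atLeast0LessThan)

fun pow_entry :: "nat \<Rightarrow> (nat \<Rightarrow> nat \<Rightarrow> real) \<Rightarrow> nat \<Rightarrow> nat \<Rightarrow> nat \<Rightarrow> real" where
  "pow_entry n M 0 i j = (if i = j then 1 else 0)"
| "pow_entry n M (Suc k) i j = (\<Sum>l<n. pow_entry n M k i l * M l j)"

lemma real_mat_power_index:
  assumes "i < n" "j < n"
  shows "(real_mat n M ^\<^sub>m k) $$ (i, j) = complex_of_real (pow_entry n M k i j)"
  using assms(2)
proof (induction k arbitrary: j)
  case (Suc k)
  have "(real_mat n M ^\<^sub>m Suc k) $$ (i, j) = (\<Sum>l<n. (real_mat n M ^\<^sub>m k) $$ (i, l) * real_mat n M $$ (l, j))"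
    using assms(1) Suc.prems by (simp add: index_mult_mat row_def col_def scalar_prod_def atLeast0LessThan)
  also have "\<dots> = (\<Sum>l<n. complex_of_real (pow_entry n M k i l) * complex_of_real (M l j))"
    using Suc by (intro sum.cong) (auto simp: real_mat_def)
  finally show ?case by simp
qed (use assms in simp)

lemma pow_entry_scale: "pow_entry n (\<lambda>i j. c * M i j) k i j = c ^ k * pow_entry n M k i j"
proof (induction k arbitrary: j)
  case (Suc k)
  have "pow_entry n (\<lambda>i j. c * M i j) (Suc k) i j = (\<Sum>l<n. c ^ Suc k * (pow_entry n M k i l * M l j))"
    using Suc by (simp add: algebra_simps)
  then show ?case by (simp add: sum_distrib_left)
qed simp

lemma pow_entry_1:
  assumes "i < n"
  shows "pow_entry n M (Suc 0) i j = M i j"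
proof -
  have "pow_entry n M (Suc 0) i j = (\<Sum>l<n. (if i = l then 1 else 0) * M l j)"
    by simp
  also have "\<dots> = (\<Sum>l<n. if i = l then M l j else 0)"
    by (intro sum.cong) auto
  finally show ?thesis using assms by (simp add: sum.delta)
qed

lemma pow_entry_add:
  assumes "j < n"
  shows "pow_entry n M (a + b) i j = (\<Sum>l<n. pow_entry n M a i l * pow_entry n M b l j)"
  using assms
proof (induction b arbitrary: j)
  case 0
  then show ?case by (simp add: if_distrib sum.delta' cong: if_cong)
next
  case (Suc b)
  have "pow_entry n M (a + Suc b) i j = (\<Sum>m<n. pow_entry n M (a + b) i m * M m j)"
    by simp
  also have "\<dots> = (\<Sum>m<n. (\<Sum>l<n. pow_entry n M a i l * pow_entry n M b l m) * M m j)"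
    using Suc.IH by (intro sum.cong) auto
  also have "\<dots> = (\<Sum>m<n. \<Sum>l<n. pow_entry n M a i l * (pow_entry n M b l m * M m j))"
    by (simp add: sum_distrib_right mult.assoc)
  also have "\<dots> = (\<Sum>l<n. \<Sum>m<n. pow_entry n M a i l * (pow_entry n M b l m * M m j))"
    by (rule sum.swap)
  finally show ?case by (simp add: sum_distrib_left)
qed

lemma pow_entry_sym:
  assumes sym: "\<And>i j. M i j = M j i" and "i < n" "j < n"
  shows "pow_entry n M k i j = pow_entry n M k j i"
  using assms(2,3)
proof (induction k arbitrary: i j)
  case (Suc k)
  have "pow_entry n M (Suc k) i j = (\<Sum>l<n. pow_entry n M (Suc 0) j l * pow_entry n M k l i)"
    using Suc sym pow_entry_1[of j n M] by (auto simp: mult.commute intro!: sum.cong)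
  also have "\<dots> = pow_entry n M (Suc 0 + k) j i"
    using pow_entry_add[of i n M "Suc 0" k j] Suc.prems(1) by simp
  finally show ?case by simp
qed simp

lemma eigenvalue_real_mat_scale:
  assumes "s > 0" and "eigenvalue (real_mat n (\<lambda>i j. (1 / s) * M i j)) \<nu>"
  shows "eigenvalue (real_mat n M) (complex_of_real s * \<nu>)"
proof -
  from assms(2) obtain z where zc: "z \<in> carrier_vec n" and zn: "z \<noteq> 0\<^sub>v n"
    and ze: "real_mat n (\<lambda>i j. (1 / s) * M i j) *\<^sub>v z = \<nu> \<cdot>\<^sub>v z"
    unfolding eigenvalue_def eigenvector_def by auto
  have "real_mat n M *\<^sub>v z = (complex_of_real s * \<nu>) \<cdot>\<^sub>v z"
  proof (rule eq_vecI)
    fix i assume "i < dim_vec ((complex_of_real s * \<nu>) \<cdot>\<^sub>v z)"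
    then have i: "i < n" using zc by auto
    have "(real_mat n M *\<^sub>v z) $ i = complex_of_real s * (\<Sum>j<n. complex_of_real ((1 / s) * M i j) * z $ j)"
      using assms(1) by (simp add: real_mat_mult_vec_index[OF zc i] sum_distrib_left)
    also have "\<dots> = complex_of_real s * (\<nu> \<cdot>\<^sub>v z) $ i"
      using real_mat_mult_vec_index[OF zc i, of "\<lambda>i j. (1 / s) * M i j"] ze by simp
    finally show "(real_mat n M *\<^sub>v z) $ i = ((complex_of_real s * \<nu>) \<cdot>\<^sub>v z) $ i"
      using i zc by simp
  qed (use zc in simp)
  then show ?thesis using zc zn unfolding eigenvalue_def eigenvector_def by auto
qed

lemma spectral_radius_real_mat_nonneg: "n > 0 \<Longrightarrow> 0 \<le> spectral_radius (real_mat n M)"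
  using spectral_radius_mem_max(1)[OF real_mat_carrier[of n M]] by auto

lemma eigenvalue_abs_le_spectral_radius:
  assumes "n > 0" and "\<exists>i<n. v i \<noteq> 0" and "\<forall>i<n. (\<Sum>j<n. M i j * v j) = \<mu> * v i"
  shows "\<bar>\<mu>\<bar> \<le> spectral_radius (real_mat n M)"
proof -
  define V where "V = vec n (\<lambda>i. complex_of_real (v i))"
  have Vc: "V \<in> carrier_vec n" unfolding V_def by simp
  have "V \<noteq> 0\<^sub>v n"
    using assms(2) unfolding V_def by (metis index_vec index_zero_vec(1) of_real_eq_0_iff)
  moreover have "real_mat n M *\<^sub>v V = complex_of_real \<mu> \<cdot>\<^sub>v V"
  proof (rule eq_vecI)
    fix i assume "i < dim_vec (complex_of_real \<mu> \<cdot>\<^sub>v V)"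
    then have i: "i < n" using Vc by simp
    have "(real_mat n M *\<^sub>v V) $ i = complex_of_real (\<Sum>j<n. M i j * v j)"
      unfolding real_mat_mult_vec_index[OF Vc i] by (simp add: V_def)
    then show "(real_mat n M *\<^sub>v V) $ i = (complex_of_real \<mu> \<cdot>\<^sub>v V) $ i"
      using assms(3) i by (simp add: V_def)
  qed (use Vc in simp)
  ultimately have "complex_of_real \<mu> \<in> spectrum (real_mat n M)"
    unfolding spectrum_def eigenvalue_def eigenvector_def using Vc by auto
  then show ?thesis using spectral_radius_mem_max(2)[OF real_mat_carrier assms(1)] by force
qed

lemma pow_entry_growth_bound:
  assumes n: "n > 0" and s: "spectral_radius (real_mat n M) < s"
  shows "\<exists>c. \<forall>k i j. i < n \<longrightarrow> j < n \<longrightarrow> \<bar>pow_entry n M k i j\<bar> \<le> c * s ^ k"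
proof -
  have s0: "s > 0" using s spectral_radius_real_mat_nonneg[OF n, of M] by linarith
  let ?B = "real_mat n (\<lambda>i j. (1 / s) * M i j)"
  have "cmod \<nu> < 1" if "\<nu> \<in> spectrum ?B" for \<nu>
  proof -
    have "complex_of_real s * \<nu> \<in> spectrum (real_mat n M)"
      using that eigenvalue_real_mat_scale[OF s0] unfolding spectrum_def by auto
    then have "s * cmod \<nu> \<le> spectral_radius (real_mat n M)"
      using spectral_radius_mem_max(2)[OF real_mat_carrier n] s0 by (force simp: norm_mult)
    then have "s * cmod \<nu> < s * 1" using s by linarith
    then show "cmod \<nu> < 1" using s0 by (simp only: mult_less_cancel_left_pos)
  qed
  then have "spectral_radius ?B < 1"
    using spectral_radius_mem_max(1)[OF real_mat_carrier n, of "\<lambda>i j. (1 / s) * M i j"] by auto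
  from spectral_radius_jnf_norm_bound_less_1_upper_triangular[OF real_mat_carrier this]
  obtain c where c: "\<And>k. norm_bound (?B ^\<^sub>m k) c" by blast
  have "\<bar>pow_entry n M k i j\<bar> \<le> c * s ^ k" if ij: "i < n" "j < n" for k i j
  proof -
    have "(?B ^\<^sub>m k) $$ (i, j) = complex_of_real ((1 / s) ^ k * pow_entry n M k i j)"
      unfolding real_mat_power_index[OF ij] pow_entry_scale ..
    moreover have "cmod ((?B ^\<^sub>m k) $$ (i, j)) \<le> c" using c[of k] ij unfolding norm_bound_def by auto
    ultimately have "\<bar>(1 / s) ^ k * pow_entry n M k i j\<bar> \<le> c" by (simp only: norm_of_real)
    then have "(1 / s) ^ k * \<bar>pow_entry n M k i j\<bar> \<le> c" using s0 by (simp add: abs_mult)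
    then show ?thesis using s0 by (simp add: field_simps power_divide)
  qed
  then show ?thesis by blast
qed

lemma two_power_exponent_unbounded:
  fixes t Y K :: real
  assumes "1 < t" "0 < Y"
  shows "\<exists>j. K < Y * t ^ (2 ^ j)"
proof -
  obtain j where j: "K / Y < t ^ j" using real_arch_pow[OF assms(1)] by blast
  have "t ^ j \<le> t ^ (2 ^ j)" using assms(1) by (intro power_increasing) (auto intro: less_imp_le less_exp)
  then have "Y * t ^ j \<le> Y * t ^ (2 ^ j)" using assms(2) by simp
  moreover have "K < Y * t ^ j" using j assms(2) by (simp add: pos_divide_less_eq mult.commute)
  ultimately show ?thesis by (meson less_le_trans)
qed

locale sym_real_mat =
  fixes n :: nat and M :: "nat \<Rightarrow> nat \<Rightarrow> real"
  assumes n_pos: "n > 0" and M_sym: "\<And>i j. M i j = M j i"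
begin

abbreviation "\<rho> \<equiv> spectral_radius (real_mat n M)"

definition quad_form :: "(nat \<Rightarrow> real) \<Rightarrow> real" where
  "quad_form y = (\<Sum>i<n. \<Sum>j<n. y i * M i j * y j)"

definition pow_form :: "(nat \<Rightarrow> real) \<Rightarrow> nat \<Rightarrow> real" where
  "pow_form y k = (\<Sum>i<n. \<Sum>j<n. y i * pow_entry n M k i j * y j)"

definition pow_apply :: "(nat \<Rightarrow> real) \<Rightarrow> nat \<Rightarrow> nat \<Rightarrow> real" where
  "pow_apply y k l = (\<Sum>j<n. pow_entry n M k l j * y j)"

lemma pow_form_1: "pow_form y (Suc 0) = quad_form y"
  unfolding pow_form_def quad_form_def by (intro sum.cong refl) (simp add: pow_entry_1 del: pow_entry.simps)

lemma pow_form_double: "pow_form y (k + k) = (\<Sum>l<n. (pow_apply y k l)\<^sup>2)"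
proof -
  have "pow_form y (k + k) = (\<Sum>i<n. \<Sum>j<n. \<Sum>l<n. y i * pow_entry n M k i l * (pow_entry n M k l j * y j))"
    unfolding pow_form_def
    by (intro sum.cong refl) (simp add: pow_entry_add sum_distrib_left sum_distrib_right ac_simps)
  also have "\<dots> = (\<Sum>l<n. \<Sum>i<n. \<Sum>j<n. y i * pow_entry n M k i l * (pow_entry n M k l j * y j))"
    by (subst sum.swap) (rule sum.cong[OF refl], rule sum.swap)
  also have "\<dots> = (\<Sum>l<n. (\<Sum>i<n. y i * pow_entry n M k i l) * pow_apply y k l)"
    unfolding pow_apply_def sum_product by (rule refl)
  also have "\<dots> = (\<Sum>l<n. pow_apply y k l * pow_apply y k l)"
    unfolding pow_apply_def using pow_entry_sym[OF M_sym]
    by (intro sum.cong refl) (auto simp: mult.commute intro!: sum.cong)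
  finally show ?thesis by (simp add: power2_eq_square)
qed

lemma pow_form_double_lower: "(pow_form y k)\<^sup>2 \<le> (\<Sum>i<n. (y i)\<^sup>2) * pow_form y (k + k)"
proof -
  have "pow_form y k = (\<Sum>i<n. y i * pow_apply y k i)"
    unfolding pow_form_def pow_apply_def by (simp add: sum_distrib_left mult.assoc)
  then show ?thesis unfolding pow_form_double by (simp add: Cauchy_Schwarz_ineq_sum)
qed

lemma pow_form_two_power_lower:
  assumes Y: "0 < (\<Sum>i<n. (y i)\<^sup>2)" and "0 \<le> \<tau>" and base: "(\<Sum>i<n. (y i)\<^sup>2) * \<tau> \<le> quad_form y"
  shows "(\<Sum>i<n. (y i)\<^sup>2) * \<tau> ^ (2 ^ j) \<le> pow_form y (2 ^ j)"
proof (induction j)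
  case 0
  then show ?case using base pow_form_1 by simp
next
  case (Suc j)
  have "((\<Sum>i<n. (y i)\<^sup>2) * \<tau> ^ (2 ^ j))\<^sup>2 \<le> (pow_form y (2 ^ j))\<^sup>2"
    using Suc Y \<open>0 \<le> \<tau>\<close> by (intro power_mono) auto
  also have "\<dots> \<le> (\<Sum>i<n. (y i)\<^sup>2) * pow_form y (2 ^ Suc j)"
    using pow_form_double_lower by (simp add: mult_2)
  finally show ?case using Y by (simp add: power2_eq_square power_mult power_add mult_2 algebra_simps)
qed

lemma pow_form_growth_bound:
  assumes "\<rho> < s"
  shows "\<exists>K. \<forall>k. pow_form y k \<le> K * s ^ k"
proof -
  obtain c where c: "\<And>k i j. i < n \<Longrightarrow> j < n \<Longrightarrow> \<bar>pow_entry n M k i j\<bar> \<le> c * s ^ k"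
    using pow_entry_growth_bound[OF n_pos assms] by blast
  have "pow_form y k \<le> c * (\<Sum>i<n. \<bar>y i\<bar>)\<^sup>2 * s ^ k" for k
  proof -
    have "pow_form y k \<le> (\<Sum>i<n. \<Sum>j<n. \<bar>y i\<bar> * (c * s ^ k) * \<bar>y j\<bar>)"
      unfolding pow_form_def
    proof (intro sum_mono)
      fix i j assume "i \<in> {..<n}" "j \<in> {..<n}"
      then have "\<bar>y i\<bar> * \<bar>pow_entry n M k i j\<bar> * \<bar>y j\<bar> \<le> \<bar>y i\<bar> * (c * s ^ k) * \<bar>y j\<bar>"
        using c by (intro mult_right_mono mult_left_mono) auto
      moreover have "y i * pow_entry n M k i j * y j \<le> \<bar>y i\<bar> * \<bar>pow_entry n M k i j\<bar> * \<bar>y j\<bar>"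
        by (metis abs_ge_self abs_mult)
      ultimately show "y i * pow_entry n M k i j * y j \<le> \<bar>y i\<bar> * (c * s ^ k) * \<bar>y j\<bar>"
        by linarith
    qed
    then show ?thesis
      unfolding power2_eq_square by (simp add: sum_distrib_left sum_distrib_right algebra_simps)
  qed
  then show ?thesis by blast
qed

text \<open>Repeated squaring with \<open>pow_form_double_lower\<close> forces \<open>pow_form y (2 ^ j)\<close> to grow like
  \<open>\<tau> ^ 2 ^ j\<close>, where \<open>\<tau>\<close> is the Rayleigh quotient of \<open>y\<close>; this contradicts the growth bound
  unless \<open>\<tau> \<le> \<rho>\<close>.\<close>

lemma quad_form_le_spectral_radius: "quad_form y \<le> \<rho> * (\<Sum>i<n. (y i)\<^sup>2)"
proof (rule ccontr)
  define Y where "Y = (\<Sum>i<n. (y i)\<^sup>2)"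
  assume "\<not> quad_form y \<le> \<rho> * (\<Sum>i<n. (y i)\<^sup>2)"
  then have big: "\<rho> * Y < quad_form y" unfolding Y_def by simp
  have Y0: "0 \<le> Y" unfolding Y_def by (simp add: sum_nonneg)
  have "Y \<noteq> 0"
  proof
    assume "Y = 0"
    then have "\<forall>i<n. y i = 0" unfolding Y_def using sum_nonneg_eq_0_iff[of "{..<n}" "\<lambda>i. (y i)\<^sup>2"] by simp
    then show False using big \<open>Y = 0\<close> by (simp add: quad_form_def)
  qed
  with Y0 have Ypos: "0 < Y" by simp
  define \<tau> where "\<tau> = quad_form y / Y"
  define s where "s = (\<rho> + \<tau>) / 2"
  have \<rho>_nonneg: "0 \<le> \<rho>" using spectral_radius_real_mat_nonneg[OF n_pos] .
  have \<tau>: "\<rho> < \<tau>" unfolding \<tau>_def using big Ypos by (simp add: field_simps)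
  then have s: "\<rho> < s" "s < \<tau>" "0 < s" unfolding s_def using \<rho>_nonneg by auto
  obtain K where K: "\<And>k. pow_form y k \<le> K * s ^ k" using pow_form_growth_bound[OF s(1)] by blast
  have "Y * \<tau> = quad_form y" unfolding \<tau>_def using Ypos by simp
  then have grow: "Y * \<tau> ^ (2 ^ j) \<le> pow_form y (2 ^ j)" for j
    using pow_form_two_power_lower[of y \<tau> j] Ypos \<tau> \<rho>_nonneg unfolding Y_def by simp
  have "Y * (\<tau> / s) ^ (2 ^ j) \<le> K" for j
    using order_trans[OF grow K] s(3) by (simp add: power_divide field_simps)
  moreover obtain j where "K < Y * (\<tau> / s) ^ (2 ^ j)"
    using two_power_exponent_unbounded[of "\<tau> / s" Y K] s Ypos by auto
  ultimately show False by (meson not_le)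
qed

lemma quad_form_add_unit:
  fixes v :: "nat \<Rightarrow> real"
  assumes i: "i < n"
  defines "e \<equiv> \<lambda>a::nat. if a = i then 1 else (0::real)"
  shows "quad_form (\<lambda>a. v a + t * e a) = quad_form v + 2 * t * (\<Sum>b<n. M i b * v b) + t\<^sup>2 * M i i"
proof -
  have row: "(\<Sum>a<n. \<Sum>b<n. e a * M a b * w b) = (\<Sum>b<n. M i b * w b)" for w
  proof -
    have "(\<Sum>a<n. \<Sum>b<n. e a * M a b * w b) = (\<Sum>a<n. if a = i then (\<Sum>b<n. M a b * w b) else 0)"
      unfolding e_def by (intro sum.cong refl) auto
    then show ?thesis using i by (simp add: sum.delta')
  qed
  have col: "(\<Sum>a<n. \<Sum>b<n. v a * M a b * e b) = (\<Sum>b<n. M i b * v b)"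
  proof -
    have "(\<Sum>b<n. v a * M a b * e b) = v a * M a i" for a
    proof -
      have "(\<Sum>b<n. v a * M a b * e b) = (\<Sum>b<n. if b = i then v a * M a i else 0)"
        unfolding e_def by (intro sum.cong refl) auto
      then show ?thesis using i by (simp add: sum.delta')
    qed
    then show ?thesis by (simp add: M_sym[of _ i] mult.commute)
  qed
  have "(\<Sum>b<n. M i b * e b) = (\<Sum>b<n. if b = i then M i i else 0)"
    by (intro sum.cong refl) (auto simp: e_def)
  then have diag: "(\<Sum>a<n. \<Sum>b<n. e a * M a b * e b) = M i i"
    using row[of e] i by (simp add: sum.delta')
  have "quad_form (\<lambda>a. v a + t * e a) = quad_form v + t * (\<Sum>a<n. \<Sum>b<n. e a * M a b * v b)
      + t * (\<Sum>a<n. \<Sum>b<n. v a * M a b * e b) + t\<^sup>2 * (\<Sum>a<n. \<Sum>b<n. e a * M a b * e b)"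
    unfolding quad_form_def by (simp add: algebra_simps power2_eq_square sum.distrib sum_distrib_left)
  then show ?thesis unfolding diag row[of v] col by simp
qed

lemma sum_squares_add_unit:
  fixes v :: "nat \<Rightarrow> real"
  assumes "i < n"
  shows "(\<Sum>a<n. (v a + t * (if a = i then 1 else 0))\<^sup>2) = (\<Sum>a<n. (v a)\<^sup>2) + 2 * t * v i + t\<^sup>2"
proof -
  have "(\<Sum>a<n. (v a + t * (if a = i then 1 else 0))\<^sup>2) =
        (\<Sum>a<n. (v a)\<^sup>2 + (if a = i then 2 * t * v i + t\<^sup>2 else 0))"
    by (intro sum.cong refl) (auto simp: power2_eq_square algebra_simps)
  then show ?thesis using assms by (simp add: sum.distrib sum.delta')
qed

lemma linear_dominated_by_quadratic:
  fixes D e :: real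
  assumes "\<And>t. 2 * t * D + t\<^sup>2 * e \<le> 0"
  shows "D = 0"
proof -
  define c where "c = \<bar>e\<bar> + 1"
  have c: "0 < c" "0 < 2 * c + e" unfolding c_def by auto
  have "2 * (D / c) * D + (D / c)\<^sup>2 * e = D\<^sup>2 * (2 * c + e) / c\<^sup>2"
    using c by (simp add: field_simps power2_eq_square)
  then have "D\<^sup>2 * (2 * c + e) \<le> 0" using assms[of "D / c"] c by (simp add: divide_le_0_iff)
  then show ?thesis using c by (simp add: mult_le_0_iff)
qed

lemma quad_form_eq_imp_eigenvector:
  assumes eq: "quad_form v = \<rho> * (\<Sum>a<n. (v a)\<^sup>2)" and i: "i < n"
  shows "(\<Sum>j<n. M i j * v j) = \<rho> * v i"
proof -
  define R where "R = (\<Sum>j<n. M i j * v j)"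
  define S where "S = (\<Sum>a<n. (v a)\<^sup>2)"
  have "2 * t * (R - \<rho> * v i) + t\<^sup>2 * (M i i - \<rho>) \<le> 0" for t
  proof -
    have "quad_form v + 2 * t * R + t\<^sup>2 * M i i \<le> \<rho> * (S + 2 * t * v i + t\<^sup>2)"
      using quad_form_le_spectral_radius[of "\<lambda>a. v a + t * (if a = i then 1 else 0)"]
      unfolding quad_form_add_unit[OF i] sum_squares_add_unit[OF i] R_def S_def .
    moreover have "\<rho> * (S + 2 * t * v i + t\<^sup>2) = \<rho> * S + 2 * t * (\<rho> * v i) + t\<^sup>2 * \<rho>"
      by (simp only: distrib_left mult.left_commute mult.commute)
    moreover have "2 * t * (R - \<rho> * v i) + t\<^sup>2 * (M i i - \<rho>)
        = 2 * t * R - 2 * t * (\<rho> * v i) + t\<^sup>2 * M i i - t\<^sup>2 * \<rho>"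
      by (simp only: right_diff_distrib)
    ultimately show ?thesis using eq unfolding S_def[symmetric] by linarith
  qed
  then have "R - \<rho> * v i = 0" by (rule linear_dominated_by_quadratic)
  then show ?thesis unfolding R_def by simp
qed

end

locale nonneg_sym_real_mat = sym_real_mat +
  assumes M_nonneg: "\<And>i j. 0 \<le> M i j"
begin

text \<open>The entrywise modulus \<open>v\<close> of an eigenvector for an eigenvalue of maximal
  modulus satisfies \<open>\<rho> v \<le> M v\<close> entrywise, hence attains the Rayleigh bound.\<close>

lemma perron_vector:
  "\<exists>v. (\<forall>i. 0 \<le> v i) \<and> (\<exists>i<n. v i \<noteq> 0) \<and> (\<forall>i<n. (\<Sum>j<n. M i j * v j) = \<rho> * v i)"
proof -
  from spectral_radius_mem_max(1)[OF real_mat_carrier[of n M] n_pos]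
  obtain \<nu> where "\<nu> \<in> spectrum (real_mat n M)" and \<rho>: "\<rho> = cmod \<nu>" by auto
  then obtain z where zc: "z \<in> carrier_vec n" and zn: "z \<noteq> 0\<^sub>v n" and ze: "real_mat n M *\<^sub>v z = \<nu> \<cdot>\<^sub>v z"
    unfolding spectrum_def eigenvalue_def eigenvector_def by auto
  define v where "v = (\<lambda>i. if i < n then cmod (z $ i) else 0)"
  have v_nonneg: "\<forall>i. 0 \<le> v i" unfolding v_def by simp
  have v_nonzero: "\<exists>i<n. v i \<noteq> 0"
  proof (rule ccontr)
    assume "\<not> (\<exists>i<n. v i \<noteq> 0)"
    then have "z = 0\<^sub>v n" using zc unfolding v_def by (intro eq_vecI) auto
    then show False using zn by simp
  qed
  have sub: "\<rho> * v i \<le> (\<Sum>j<n. M i j * v j)" if i: "i < n" for i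
  proof -
    have "\<nu> * z $ i = (\<Sum>j<n. complex_of_real (M i j) * z $ j)"
      using real_mat_mult_vec_index[OF zc i, of M] ze zc i by simp
    then have "cmod (\<nu> * z $ i) = cmod (\<Sum>j<n. complex_of_real (M i j) * z $ j)" by simp
    then have "\<rho> * v i = cmod (\<Sum>j<n. complex_of_real (M i j) * z $ j)"
      using \<rho> i unfolding v_def by (simp only: norm_mult if_True)
    also have "\<dots> \<le> (\<Sum>j<n. cmod (complex_of_real (M i j) * z $ j))" by (rule norm_sum)
    also have "\<dots> = (\<Sum>j<n. M i j * v j)"
      unfolding v_def by (intro sum.cong refl) (auto simp: norm_mult M_nonneg)
    finally show ?thesis .
  qed
  have "\<rho> * (\<Sum>a<n. (v a)\<^sup>2) = (\<Sum>a<n. v a * (\<rho> * v a))"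
    by (simp add: sum_distrib_left power2_eq_square mult.left_commute)
  also have "\<dots> \<le> (\<Sum>a<n. v a * (\<Sum>b<n. M a b * v b))"
    using sub v_nonneg by (intro sum_mono mult_left_mono) auto
  also have "\<dots> = quad_form v"
    unfolding quad_form_def sum_distrib_left by (simp add: mult.assoc)
  finally have "\<rho> * (\<Sum>a<n. (v a)\<^sup>2) \<le> quad_form v" .
  then have "quad_form v = \<rho> * (\<Sum>a<n. (v a)\<^sup>2)" using quad_form_le_spectral_radius[of v] by simp
  then show ?thesis using v_nonneg v_nonzero quad_form_eq_imp_eigenvector by (intro exI[of _ v]) auto
qed

end

section \<open>Graphs\<close>

definition adj_real :: "(nat \<Rightarrow> nat \<Rightarrow> bool) \<Rightarrow> nat \<Rightarrow> nat \<Rightarrow> real" where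
  "adj_real E i j = (if E i j then 1 else 0)"

lemma adj_mat_eq_real_mat: "adj_mat n E = real_mat n (adj_real E)"
  unfolding adj_mat_def real_mat_def adj_real_def by (rule eq_matI) auto

lemma adj_real_nonneg: "0 \<le> adj_real E i j"
  unfolding adj_real_def by simp

lemma friendship_edge_3_cases:
  assumes "friendship_edge 3 i j"
  shows "i < 7 \<and> j < 7 \<and> (i = 0 \<and> j \<noteq> 0 \<or> j = 0 \<and> i \<noteq> 0 \<or>
     (i = 1 \<and> j = 2) \<or> (i = 2 \<and> j = 1) \<or> (i = 3 \<and> j = 4) \<or> (i = 4 \<and> j = 3) \<or>
     (i = 5 \<and> j = 6) \<or> (i = 6 \<and> j = 5))"
proof -
  have "i \<le> 6" "j \<le> 6" "i \<noteq> j" using assms unfolding friendship_edge_def by auto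
  moreover have "i = 0 \<or> j = 0 \<or> (\<exists>t. 1 \<le> t \<and> t \<le> 3 \<and> {i, j} = {2 * t - 1, 2 * t})"
    using assms unfolding friendship_edge_def by auto
  moreover have "(i = 1 \<and> j = 2) \<or> (i = 2 \<and> j = 1) \<or> (i = 3 \<and> j = 4) \<or> (i = 4 \<and> j = 3) \<or>
     (i = 5 \<and> j = 6) \<or> (i = 6 \<and> j = 5)" if "1 \<le> t" "t \<le> 3" "{i, j} = {2 * t - 1, 2 * t}" for t
  proof -
    have "t = 1 \<or> t = 2 \<or> t = 3" using that by auto
    then show ?thesis using that(3) by (auto simp: doubleton_eq_iff)
  qed
  ultimately show ?thesis by auto
qed

lemma F_free_3_no_three_triangles:
  assumes "F_free 3 n E" and sym: "\<forall>i j. E i j \<longrightarrow> E j i"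
    and dist: "distinct [c, p1, q1, p2, q2, p3, q3]"
    and lt: "c < n" "p1 < n" "q1 < n" "p2 < n" "q2 < n" "p3 < n" "q3 < n"
    and e: "E c p1" "E c q1" "E p1 q1" "E c p2" "E c q2" "E p2 q2" "E c p3" "E c q3" "E p3 q3"
  shows False
proof -
  define L where "L = [c, p1, q1, p2, q2, p3, q3]"
  have "inj_on ((!) L) {..<2 * 3 + 1}"
    using dist unfolding L_def[symmetric] by (intro inj_onI) (simp add: L_def nth_eq_iff_index_eq)
  moreover have "(!) L ` {..<2 * 3 + 1} \<subseteq> {..<n}"
  proof
    fix y assume "y \<in> (!) L ` {..<2 * 3 + 1}"
    then obtain i where i: "i < 7" "y = L ! i" by auto
    then have "i = 0 \<or> i = 1 \<or> i = 2 \<or> i = 3 \<or> i = 4 \<or> i = 5 \<or> i = 6" by auto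
    then show "y \<in> {..<n}" using i lt unfolding L_def by auto
  qed
  moreover have "E (L ! i) (L ! j)" if fe: "friendship_edge 3 i j" for i j
  proof -
    note cases = friendship_edge_3_cases[OF fe]
    have i7: "i = 0 \<or> i = 1 \<or> i = 2 \<or> i = 3 \<or> i = 4 \<or> i = 5 \<or> i = 6"
      and j7: "j = 0 \<or> j = 1 \<or> j = 2 \<or> j = 3 \<or> j = 4 \<or> j = 5 \<or> j = 6"
      using cases by auto
    have es: "E p1 c" "E q1 c" "E q1 p1" "E p2 c" "E q2 c" "E q2 p2" "E p3 c" "E q3 c" "E q3 p3"
      using e sym by blast+
    have L: "L ! 0 = c" "L ! 1 = p1" "L ! 2 = q1" "L ! 3 = p2" "L ! 4 = q2" "L ! 5 = p3" "L ! 6 = q3"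
      unfolding L_def by simp_all
    from cases show ?thesis
    proof (elim conjE disjE)
      assume "i = 0" "j \<noteq> 0" then show ?thesis using j7 L e by auto
    next
      assume "j = 0" "i \<noteq> 0" then show ?thesis using i7 L es by auto
    qed (use L e es in auto)
  qed
  ultimately have "contains_subgraph n E (2 * 3 + 1) (friendship_edge 3)"
    unfolding contains_subgraph_def by blast
  then show False using assms(1) unfolding F_free_def by simp
qed

locale finite_graph =
  fixes n :: nat and E :: "nat \<Rightarrow> nat \<Rightarrow> bool"
  assumes simple: "simple_graph n E"
begin

lemma edge_less: "E i j \<Longrightarrow> i < n \<and> j < n"
  using simple unfolding simple_graph_def by blast

lemma edge_sym: "E i j \<Longrightarrow> E j i"
  using simple unfolding simple_graph_def by blast

lemma edge_irrefl: "\<not> E i i"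
  using simple unfolding simple_graph_def by blast

lemma adj_real_sym: "adj_real E i j = adj_real E j i"
  unfolding adj_real_def using edge_sym by auto

lemma nonneg_sym_real_mat: "n > 0 \<Longrightarrow> nonneg_sym_real_mat n (adj_real E)"
  by unfold_locales (auto simp: adj_real_sym adj_real_nonneg)

lemma graph_spectral_radius_eq: "graph_spectral_radius n E = spectral_radius (real_mat n (adj_real E))"
  unfolding graph_spectral_radius_def adj_mat_eq_real_mat ..

lemma card_arcs: "card {(i, j). i < n \<and> j < n \<and> E i j} = 2 * num_edges n E"
proof -
  define A1 where "A1 = {(i, j). i < n \<and> j < n \<and> E i j \<and> i < j}"
  define A2 where "A2 = {(i, j). i < n \<and> j < n \<and> E i j \<and> j < i}"
  define S where "S = {{i, j} | i j. i < n \<and> j < n \<and> E i j}"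
  have arcs: "{(i, j). i < n \<and> j < n \<and> E i j} = A1 \<union> A2"
    unfolding A1_def A2_def by auto (metis edge_irrefl linorder_neqE_nat)
  have fin: "finite A1" "finite A2"
    unfolding A1_def A2_def by (auto intro: finite_subset[of _ "{..<n} \<times> {..<n}"])
  have "bij_betw (\<lambda>(i, j). (j, i)) A1 A2"
    unfolding bij_betw_def inj_on_def A1_def A2_def
    by (auto simp: image_def edge_sym intro!: exI[of _ "(_, _)"])
  then have "card A2 = card A1" by (simp add: bij_betw_same_card)
  moreover have "bij_betw (\<lambda>(i, j). {i, j}) A1 S"
  proof (unfold bij_betw_def, intro conjI)
    show "inj_on (\<lambda>(i, j). {i, j}) A1"
      unfolding inj_on_def A1_def by (auto simp: doubleton_eq_iff)
    show "(\<lambda>(i, j). {i, j}) ` A1 = S"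
    proof
      show "(\<lambda>(i, j). {i, j}) ` A1 \<subseteq> S" unfolding A1_def S_def by auto
      show "S \<subseteq> (\<lambda>(i, j). {i, j}) ` A1"
      proof
        fix e assume "e \<in> S"
        then obtain i j where e: "e = {i, j}" "i < n" "j < n" "E i j" unfolding S_def by auto
        then have "(i, j) \<in> A1 \<or> (j, i) \<in> A1"
          unfolding A1_def using edge_sym by auto (metis edge_irrefl linorder_neqE_nat)
        then show "e \<in> (\<lambda>(i, j). {i, j}) ` A1" using e by (force simp: insert_commute)
      qed
    qed
  qed
  then have "card A1 = num_edges n E" unfolding num_edges_def S_def by (simp add: bij_betw_same_card)
  moreover have "A1 \<inter> A2 = {}" unfolding A1_def A2_def by auto
  ultimately show ?thesis unfolding arcs using card_Un_disjoint[OF fin] by simp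
qed

lemma sum_adj_real: "(\<Sum>i<n. \<Sum>j<n. adj_real E i j) = 2 * real (num_edges n E)"
proof -
  have "(\<Sum>i<n. \<Sum>j<n. adj_real E i j) = (\<Sum>p\<in>{..<n} \<times> {..<n}. if p \<in> {(i, j). E i j} then 1 else 0)"
    unfolding sum.cartesian_product adj_real_def by (intro sum.cong) auto
  also have "\<dots> = real (card ({..<n} \<times> {..<n} \<inter> {(i, j). E i j}))"
    by (simp add: sum.If_cases)
  also have "{..<n} \<times> {..<n} \<inter> {(i, j). E i j} = {(i, j). i < n \<and> j < n \<and> E i j}" by auto
  finally show ?thesis using card_arcs by simp
qed

definition nbhd :: "nat \<Rightarrow> nat set" where
  "nbhd u = {v. v < n \<and> E u v}"

definition far :: "nat \<Rightarrow> nat set" where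
  "far u = {w. w < n \<and> w \<noteq> u \<and> \<not> E u w}"

lemma finite_nbhd [simp]: "finite (nbhd u)"
  unfolding nbhd_def by (rule finite_subset[of _ "{..<n}"]) auto

lemma finite_far [simp]: "finite (far u)"
  unfolding far_def by (rule finite_subset[of _ "{..<n}"]) auto

lemma mem_nbhd: "v \<in> nbhd u \<longleftrightarrow> v < n \<and> E u v"
  unfolding nbhd_def by simp

lemma mem_far: "w \<in> far u \<longleftrightarrow> w < n \<and> w \<noteq> u \<and> \<not> E u w"
  unfolding far_def by simp

lemma sum_vertices_split:
  assumes "u < n"
  shows "(\<Sum>j<n. f j) = f u + sum f (nbhd u) + sum f (far u)"
proof -
  have eq: "{..<n} = insert u (nbhd u \<union> far u)" using assms by (auto simp: mem_nbhd mem_far)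
  have "u \<notin> nbhd u \<union> far u" using edge_irrefl by (auto simp: mem_nbhd mem_far)
  then have "(\<Sum>j<n. f j) = f u + sum f (nbhd u \<union> far u)" unfolding eq by simp
  also have "sum f (nbhd u \<union> far u) = sum f (nbhd u) + sum f (far u)"
    by (rule sum.union_disjoint) (auto simp: mem_nbhd mem_far)
  finally show ?thesis by (simp add: add.assoc)
qed

lemma degree_ge_eigenvalue:
  assumes "u < n" and "\<forall>i<n. 0 \<le> x i \<and> x i \<le> 1" and "x u = 1"
    and "(\<Sum>j<n. adj_real E u j * x j) = r * x u"
  shows "r \<le> real (card (nbhd u))"
proof -
  have "r \<le> (\<Sum>j<n. adj_real E u j)"
    using assms(2-4) by (auto simp: adj_real_def intro!: sum_mono)
  also have "(\<Sum>j<n. adj_real E u j) = real (card (nbhd u))"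
    unfolding adj_real_def nbhd_def by (simp add: sum.If_cases Int_def)
  finally show ?thesis .
qed

end

section \<open>Weighted graphs of matching number at most two\<close>

definition excess :: "(nat \<Rightarrow> nat \<Rightarrow> bool) \<Rightarrow> (nat \<Rightarrow> real) \<Rightarrow> nat \<Rightarrow> nat \<Rightarrow> real" where
  "excess E x v w = (if E v w then x v + x w - 1 else 0)"

definition no_three_disjoint_edges :: "nat set \<Rightarrow> (nat \<Rightarrow> nat \<Rightarrow> bool) \<Rightarrow> bool" where
  "no_three_disjoint_edges N E \<longleftrightarrow> \<not> (\<exists>a1 b1 a2 b2 a3 b3. a1 \<in> N \<and> b1 \<in> N \<and> a2 \<in> N \<and> b2 \<in> N \<and>
      a3 \<in> N \<and> b3 \<in> N \<and> distinct [a1, b1, a2, b2, a3, b3] \<and> E a1 b1 \<and> E a2 b2 \<and> E a3 b3)"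

definition unit_spine_book :: "nat set \<Rightarrow> (nat \<Rightarrow> nat \<Rightarrow> bool) \<Rightarrow> (nat \<Rightarrow> real) \<Rightarrow> bool" where
  "unit_spine_book N E x \<longleftrightarrow> (\<exists>a b. a \<in> N \<and> b \<in> N \<and> a \<noteq> b \<and> x a = 1 \<and> x b = 1 \<and>
     (\<forall>v\<in>N. \<forall>w\<in>N. E v w \<longleftrightarrow> v \<noteq> w \<and> (v = a \<or> v = b \<or> w = a \<or> w = b)))"

lemma no_three_disjoint_edgesD:
  assumes "no_three_disjoint_edges N E" "a1 \<in> N" "b1 \<in> N" "a2 \<in> N" "b2 \<in> N" "a3 \<in> N" "b3 \<in> N"
    "distinct [a1, b1, a2, b2, a3, b3]" "E a1 b1" "E a2 b2" "E a3 b3"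
  shows False
  using assms unfolding no_three_disjoint_edges_def by blast

lemma excess_sym: "(\<forall>i j. E i j \<longrightarrow> E j i) \<Longrightarrow> excess E x v w = excess E x w v"
  unfolding excess_def by (auto simp: add.commute)

lemma sum_excess_split:
  assumes "finite N" and "W \<subseteq> N" and sym: "\<forall>i j. E i j \<longrightarrow> E j i"
    and indep: "\<forall>v\<in>N - W. \<forall>w\<in>N - W. \<not> E v w"
  shows "(\<Sum>v\<in>N. \<Sum>w\<in>N. excess E x v w) =
     (\<Sum>v\<in>W. \<Sum>w\<in>W. excess E x v w) + 2 * (\<Sum>v\<in>W. \<Sum>r\<in>N - W. excess E x v r)"
proof -
  have split: "(\<Sum>v\<in>N. f v) = (\<Sum>v\<in>W. f v) + (\<Sum>v\<in>N - W. f v)" for f :: "nat \<Rightarrow> real"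
    using sum.subset_diff[OF assms(2,1)] by (simp add: add.commute)
  have "(\<Sum>v\<in>N - W. \<Sum>w\<in>N - W. excess E x v w) = 0"
    using indep by (auto simp: excess_def intro!: sum.neutral)
  moreover have "(\<Sum>v\<in>N - W. \<Sum>w\<in>W. excess E x v w) = (\<Sum>w\<in>W. \<Sum>v\<in>N - W. excess E x w v)"
    by (subst sum.swap) (simp add: excess_sym[OF sym])
  ultimately show ?thesis by (simp add: split[of "\<lambda>v. \<Sum>w\<in>N. excess E x v w"] split sum.distrib)
qed

lemma six_edges_arith:
  fixes a b c d :: real
  assumes "0 \<le> a" "a \<le> 1" "0 \<le> b" "b \<le> 1" "0 \<le> c" "c \<le> 1" "0 \<le> d" "d \<le> 1"
  shows "(a + b - 1) + (if P then a + c - 1 else 0) + (if Q then a + d - 1 else 0)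
      + (if S then b + c - 1 else 0) + (c + d - 1) \<le> a + 2 * b + c + 2 * d - 1"
  using assms by (cases P; cases Q; cases S; simp)

lemma six_edges_arith_eq:
  fixes a b c d :: real
  assumes "0 < a" "a \<le> 1" "0 < b" "b \<le> 1" "0 < c" "c \<le> 1" "0 < d" "d \<le> 1"
    "(a + b - 1) + (if P then a + c - 1 else 0) + (if Q then a + d - 1 else 0)
      + (if S then b + c - 1 else 0) + (c + d - 1) = a + 2 * b + c + 2 * d - 1"
  shows "P \<and> Q \<and> S \<and> a = 1 \<and> c = 1"
  using assms by (cases P; cases Q; cases S; simp)

locale matching_two_weights =
  fixes N :: "nat set" and E :: "nat \<Rightarrow> nat \<Rightarrow> bool" and x :: "nat \<Rightarrow> real"
  assumes fin: "finite N"
    and sym: "\<forall>i j. E i j \<longrightarrow> E j i"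
    and irrefl: "\<forall>i. \<not> E i i"
    and matching: "no_three_disjoint_edges N E"
    and x_nonneg: "\<forall>v\<in>N. 0 \<le> x v"
    and x_le_1: "\<forall>v\<in>N. x v \<le> 1"
    and weight_big: "sum x N > 13 / 2"
begin

abbreviation "exc \<equiv> excess E x"

abbreviation "total_excess \<equiv> \<Sum>v\<in>N. \<Sum>w\<in>N. exc v w"

definition bound_with_equality :: bool where
  "bound_with_equality \<longleftrightarrow> total_excess \<le> 4 * sum x N - 6 \<and>
     ((\<forall>v\<in>N. 0 < x v) \<longrightarrow> total_excess = 4 * sum x N - 6 \<longrightarrow> unit_spine_book N E x)"

lemma bound_with_equalityI: "total_excess < 4 * sum x N - 6 \<Longrightarrow> bound_with_equality"
  unfolding bound_with_equality_def by auto

lemma exc_sym: "exc v w = exc w v"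
  using excess_sym[OF sym] .

lemma exc_self [simp]: "exc v v = 0"
  using irrefl by (simp add: excess_def)

lemma exc_le_mean:
  assumes "v \<in> N" "w \<in> N"
  shows "exc v w \<le> x v / 2 + x w / 2"
proof -
  have "x v \<le> 1" "x w \<le> 1" "0 \<le> x v" "0 \<le> x w" using assms x_nonneg x_le_1 by auto
  then show ?thesis by (auto simp: excess_def)
qed

lemma exc_le_right: "v \<in> N \<Longrightarrow> w \<in> N \<Longrightarrow> exc v w \<le> x w"
  using x_nonneg x_le_1 by (auto simp: excess_def)

lemma exc_le_1:
  assumes "v \<in> N" "w \<in> N"
  shows "exc v w \<le> 1"
proof -
  have "x v \<le> 1" "x w \<le> 1" "0 \<le> x v" "0 \<le> x w" using assms x_nonneg x_le_1 by auto
  then show ?thesis by (auto simp: excess_def)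
qed

lemma sum_exc_four:
  assumes "distinct [a, b, c, d]"
  shows "(\<Sum>v\<in>{a, b, c, d}. \<Sum>w\<in>{a, b, c, d}. exc v w) =
     2 * (exc a b + exc a c + exc a d + exc b c + exc b d + exc c d)"
  using assms by (simp add: exc_sym[of b a] exc_sym[of c a] exc_sym[of d a]
      exc_sym[of c b] exc_sym[of d b] exc_sym[of d c])

lemma sum_exc_two:
  assumes "a \<noteq> b"
  shows "(\<Sum>v\<in>{a, b}. \<Sum>w\<in>{a, b}. exc v w) = 2 * exc a b"
  using assms by (simp add: exc_sym[of b a])

lemma sum_exc_row_le_weight: "w \<in> N \<Longrightarrow> R \<subseteq> N \<Longrightarrow> (\<Sum>r\<in>R. exc w r) \<le> sum x R"
  by (rule sum_mono) (use exc_le_right in blast)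

lemma sum_exc_row_eq_0: "\<forall>r\<in>R. \<not> E w r \<Longrightarrow> (\<Sum>r\<in>R. exc w r) = 0"
  by (auto simp: excess_def intro!: sum.neutral)

lemma sum_exc_row_le_1:
  assumes "w \<in> N" "R \<subseteq> N" "\<forall>r\<in>R. E w r \<longrightarrow> r = r0"
  shows "(\<Sum>r\<in>R. exc w r) \<le> 1"
proof (cases "r0 \<in> R")
  case True
  have "finite R" using assms(2) fin finite_subset by blast
  then have "(\<Sum>r\<in>R. exc w r) = exc w r0 + (\<Sum>r\<in>R - {r0}. exc w r)"
    using True by (simp add: sum.remove)
  also have "(\<Sum>r\<in>R - {r0}. exc w r) = 0"
    using assms(3) by (auto simp: excess_def intro!: sum.neutral)
  finally show ?thesis using exc_le_1[of w r0] True assms by auto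
next
  case False
  then have "(\<Sum>r\<in>R. exc w r) = 0" using assms(3) by (intro sum_exc_row_eq_0) blast
  then show ?thesis by simp
qed

lemma sum_x_nonneg: "R \<subseteq> N \<Longrightarrow> 0 \<le> sum x R"
  using x_nonneg by (auto intro!: sum_nonneg)

lemma sum_x_split: "W \<subseteq> N \<Longrightarrow> sum x N = sum x W + sum x (N - W)"
  using sum.subset_diff[of W N x] fin by simp


text \<open>Two disjoint edges \<open>y1 z1\<close> and \<open>y2 z2\<close>: every other edge meets one of them, so the rest
  \<open>R\<close> of \<open>N\<close> is independent.\<close>

context
  fixes y1 z1 y2 z2
  assumes inN: "y1 \<in> N" "z1 \<in> N" "y2 \<in> N" "z2 \<in> N" and dist: "distinct [y1, z1, y2, z2]"
    and e1: "E y1 z1" and e2: "E y2 z2"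
begin

abbreviation "R \<equiv> N - {y1, z1, y2, z2}"

lemma R_subset: "R \<subseteq> N" by auto

lemma finite_R: "finite R" using fin by auto

lemma R_independent: "\<forall>v\<in>R. \<forall>w\<in>R. \<not> E v w"
proof (intro ballI notI)
  fix v w assume v: "v \<in> R" and w: "w \<in> R" and E: "E v w"
  have "v \<noteq> w" using E irrefl by auto
  then show False using no_three_disjoint_edgesD[OF matching inN, of v w] v w dist e1 e2 E by auto
qed

lemma total_excess_split4: "total_excess =
   2 * exc y1 z1 + 2 * exc y1 y2 + 2 * exc y1 z2 + 2 * exc z1 y2 + 2 * exc z1 z2 + 2 * exc y2 z2 +
   2 * (\<Sum>r\<in>R. exc y1 r) + 2 * (\<Sum>r\<in>R. exc z1 r) + 2 * (\<Sum>r\<in>R. exc y2 r) + 2 * (\<Sum>r\<in>R. exc z2 r)"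
proof -
  have "total_excess = (\<Sum>v\<in>{y1, z1, y2, z2}. \<Sum>w\<in>{y1, z1, y2, z2}. exc v w) +
     2 * (\<Sum>v\<in>{y1, z1, y2, z2}. \<Sum>r\<in>R. exc v r)"
    by (rule sum_excess_split[OF fin _ sym]) (use inN R_independent in auto)
  also have "(\<Sum>v\<in>{y1, z1, y2, z2}. \<Sum>r\<in>R. exc v r) =
     (\<Sum>r\<in>R. exc y1 r) + (\<Sum>r\<in>R. exc z1 r) + (\<Sum>r\<in>R. exc y2 r) + (\<Sum>r\<in>R. exc z2 r)"
    using dist by (simp add: add.assoc)
  finally show ?thesis using sum_exc_four[OF dist] by (simp add: algebra_simps)
qed

lemma sum_x_split4: "sum x N = x y1 + x z1 + x y2 + x z2 + sum x R"
  using sum_x_split[of "{y1, z1, y2, z2}"] inN dist by simp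

lemma x_bounds4:
  "0 \<le> x y1" "x y1 \<le> 1" "0 \<le> x z1" "x z1 \<le> 1" "0 \<le> x y2" "x y2 \<le> 1" "0 \<le> x z2" "x z2 \<le> 1"
  using x_nonneg x_le_1 inN by auto

lemma sum_x_R_gt: "sum x R > 5 / 2"
  using sum_x_split4 weight_big x_bounds4 by linarith

lemma exc_six_le: "exc y1 z1 + exc y1 y2 + exc y1 z2 + exc z1 y2 + exc z1 z2 + exc y2 z2 \<le>
   3 / 2 * x y1 + 3 / 2 * x z1 + 3 / 2 * x y2 + 3 / 2 * x z2"
  using exc_le_mean[OF inN(1) inN(2)] exc_le_mean[OF inN(1) inN(3)] exc_le_mean[OF inN(1) inN(4)]
    exc_le_mean[OF inN(2) inN(3)] exc_le_mean[OF inN(2) inN(4)] exc_le_mean[OF inN(3) inN(4)]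
  by linarith

lemma sum_exc_R_le: "w \<in> N \<Longrightarrow> (\<Sum>r\<in>R. exc w r) \<le> sum x R"
  by (rule sum_exc_row_le_weight) auto

lemma R_nbr_y1_z1_eq: "r \<in> R \<Longrightarrow> r' \<in> R \<Longrightarrow> E y1 r \<Longrightarrow> E z1 r' \<Longrightarrow> r = r'"
  using no_three_disjoint_edgesD[OF matching inN(1) _ inN(2) _ inN(3) inN(4), of r r'] dist e2 by auto

lemma sum_exc_R_le_one_nbr:
  assumes "w \<in> N" "r0 \<in> R" "E w r0"
  shows "(\<Sum>r\<in>R. exc w r) \<le> sum x R - 1 + x w"
proof -
  have "(\<Sum>r\<in>R. exc w r) = exc w r0 + (\<Sum>r\<in>R - {r0}. exc w r)"
    using assms finite_R by (simp add: sum.remove)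
  moreover have "(\<Sum>r\<in>R - {r0}. exc w r) \<le> (\<Sum>r\<in>R - {r0}. x r)"
    by (rule sum_mono) (use exc_le_right assms in auto)
  moreover have "sum x R = x r0 + (\<Sum>r\<in>R - {r0}. x r)"
    using assms finite_R by (simp add: sum.remove)
  moreover have "exc w r0 = x w + x r0 - 1" using assms by (simp add: excess_def)
  ultimately show ?thesis by linarith
qed

lemma adjacent_R_of_sum_exc_R_eq:
  assumes pos: "\<forall>v\<in>N. 0 < x v" and w: "w \<in> N" and eq: "(\<Sum>r\<in>R. exc w r) = sum x R"
  shows "\<forall>r\<in>R. E w r"
proof
  fix r assume r: "r \<in> R"
  have "(\<Sum>r\<in>R. x r - exc w r) = 0" using eq by (simp add: sum_subtractf)
  moreover have "0 \<le> x r' - exc w r'" if "r' \<in> R" for r'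
    using exc_le_right[OF w, of r'] that by simp
  ultimately have "x r - exc w r = 0"
    using sum_nonneg_eq_0_iff[OF finite_R, of "\<lambda>r. x r - exc w r"] r by blast
  then have "x r = exc w r" by simp
  moreover have "0 < x r" using pos r by auto
  ultimately show "E w r" unfolding excess_def by (cases "E w r") auto
qed

lemma exc_six_le_of_not_edge:
  assumes "\<not> E z1 z2"
  shows "exc y1 z1 + exc y1 y2 + exc y1 z2 + exc z1 y2 + exc z1 z2 + exc y2 z2 \<le>
    x y1 + 2 * x z1 + x y2 + 2 * x z2 - 1"
    and "(\<forall>v\<in>N. 0 < x v) \<Longrightarrow> exc y1 z1 + exc y1 y2 + exc y1 z2 + exc z1 y2 + exc z1 z2 + exc y2 z2 =
      x y1 + 2 * x z1 + x y2 + 2 * x z2 - 1 \<Longrightarrow> E y1 y2 \<and> E y1 z2 \<and> E z1 y2 \<and> x y1 = 1 \<and> x y2 = 1"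
proof -
  have six: "exc y1 z1 + exc y1 y2 + exc y1 z2 + exc z1 y2 + exc z1 z2 + exc y2 z2 =
    (x y1 + x z1 - 1) + (if E y1 y2 then x y1 + x y2 - 1 else 0) + (if E y1 z2 then x y1 + x z2 - 1 else 0)
    + (if E z1 y2 then x z1 + x y2 - 1 else 0) + (x y2 + x z2 - 1)"
    using assms e1 e2 by (simp add: excess_def)
  show "exc y1 z1 + exc y1 y2 + exc y1 z2 + exc z1 y2 + exc z1 z2 + exc y2 z2 \<le>
      x y1 + 2 * x z1 + x y2 + 2 * x z2 - 1"
    unfolding six by (rule six_edges_arith[OF x_bounds4])
  assume "\<forall>v\<in>N. 0 < x v"
  then have "0 < x y1" "0 < x z1" "0 < x y2" "0 < x z2" using inN by auto
  moreover assume "exc y1 z1 + exc y1 y2 + exc y1 z2 + exc z1 y2 + exc z1 z2 + exc y2 z2 =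
      x y1 + 2 * x z1 + x y2 + 2 * x z2 - 1"
  ultimately show "E y1 y2 \<and> E y1 z2 \<and> E z1 y2 \<and> x y1 = 1 \<and> x y2 = 1"
    unfolding six using six_edges_arith_eq x_bounds4 by blast
qed

text \<open>The only configuration in which the bound can be attained: \<open>z1\<close> and \<open>z2\<close> have no neighbour in \<open>R\<close>.\<close>

lemma unit_spine_book_of_hubs:
  assumes z1: "\<forall>r\<in>R. \<not> E z1 r" and z2: "\<forall>r\<in>R. \<not> E z2 r" and n: "\<not> E z1 z2"
    and y1: "\<forall>r\<in>R. E y1 r" and y2: "\<forall>r\<in>R. E y2 r"
    and E3: "E y1 y2" "E y1 z2" "E z1 y2" and xy: "x y1 = 1" "x y2 = 1"
  shows "unit_spine_book N E x"
proof -
  have y': "\<forall>r\<in>R. E r y1" "\<forall>r\<in>R. E r y2" using y1 y2 sym by blast+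
  have z': "\<forall>r\<in>R. \<not> E r z1" "\<forall>r\<in>R. \<not> E r z2" using z1 z2 sym by blast+
  have Er: "E z1 y1" "E z2 y2" "E y2 y1" "E z2 y1" "E y2 z1" "\<not> E z2 z1"
    using E3 e1 e2 n sym by blast+
  have "E v w \<longleftrightarrow> v \<noteq> w \<and> (v = y1 \<or> v = y2 \<or> w = y1 \<or> w = y2)" if v: "v \<in> N" and w: "w \<in> N" for v w
  proof (cases "v \<in> R")
    case vR: True
    show ?thesis
    proof (cases "w \<in> R")
      case True then show ?thesis using R_independent vR by auto
    next
      case False
      then have "w = y1 \<or> w = z1 \<or> w = y2 \<or> w = z2" using w by auto
      then show ?thesis using vR y' z' by auto
    qed
  next
    case False
    then have v4: "v = y1 \<or> v = z1 \<or> v = y2 \<or> v = z2" using v by auto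
    show ?thesis
    proof (cases "w \<in> R")
      case True then show ?thesis using v4 y1 y2 z1 z2 by auto
    next
      case False
      then have "w = y1 \<or> w = z1 \<or> w = y2 \<or> w = z2" using w by auto
      then show ?thesis using v4 E3 e1 e2 n irrefl dist Er by auto
    qed
  qed
  then show ?thesis unfolding unit_spine_book_def
    using inN dist xy by (intro exI[of _ y1] exI[of _ y2]) auto
qed

lemma bound_with_equality_if_hanging_apart:
  assumes z1: "\<forall>r\<in>R. \<not> E z1 r" and z2: "\<forall>r\<in>R. \<not> E z2 r"
    and r: "r1 \<in> R" "r2 \<in> R" "r1 \<noteq> r2" "E y1 r1" "E y2 r2"
  shows bound_with_equality
proof -
  have R0: "(\<Sum>r\<in>R. exc z1 r) = 0" "(\<Sum>r\<in>R. exc z2 r) = 0" using sum_exc_row_eq_0 z1 z2 by blast+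
  have n: "\<not> E z1 z2"
    using no_three_disjoint_edgesD[OF matching inN(1) _ inN(3) _ inN(2) inN(4), of r1 r2] r dist by auto
  have R1: "(\<Sum>r\<in>R. exc y1 r) \<le> sum x R - 1 + x y1" using sum_exc_R_le_one_nbr[OF inN(1) r(1,4)] .
  have R2: "(\<Sum>r\<in>R. exc y2 r) \<le> sum x R - 1 + x y2" using sum_exc_R_le_one_nbr[OF inN(3) r(2,5)] .
  note six = exc_six_le_of_not_edge[OF n]
  have "total_excess \<le> 4 * sum x N - 6"
    using six(1) total_excess_split4 sum_x_split4 R0 R1 R2 by linarith
  moreover have "unit_spine_book N E x" if pos: "\<forall>v\<in>N. 0 < x v" and eq: "total_excess = 4 * sum x N - 6"
  proof -
    have "exc y1 z1 + exc y1 y2 + exc y1 z2 + exc z1 y2 + exc z1 z2 + exc y2 z2 =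
        x y1 + 2 * x z1 + x y2 + 2 * x z2 - 1"
      and eq1: "(\<Sum>r\<in>R. exc y1 r) = sum x R - 1 + x y1" and eq2: "(\<Sum>r\<in>R. exc y2 r) = sum x R - 1 + x y2"
      using six(1) eq total_excess_split4 sum_x_split4 R0 R1 R2 by linarith+
    from six(2)[OF pos this(1)] have E3: "E y1 y2" "E y1 z2" "E z1 y2" and xy: "x y1 = 1" "x y2 = 1"
      by auto
    have "\<forall>r\<in>R. E y1 r" "\<forall>r\<in>R. E y2 r"
      using adjacent_R_of_sum_exc_R_eq[OF pos inN(1)] adjacent_R_of_sum_exc_R_eq[OF pos inN(3)] eq1 eq2 xy
      by simp_all
    then show ?thesis using unit_spine_book_of_hubs[OF z1 z2 n _ _ E3 xy] by blast
  qed
  ultimately show ?thesis unfolding bound_with_equality_def by blast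
qed

lemma total_excess_lt_if_hanging_together:
  assumes z1: "\<forall>r\<in>R. \<not> E z1 r" and z2: "\<forall>r\<in>R. \<not> E z2 r"
    and together: "\<not> (\<exists>r1\<in>R. \<exists>r2\<in>R. r1 \<noteq> r2 \<and> E y1 r1 \<and> E y2 r2)"
  shows "total_excess < 4 * sum x N - 6"
proof -
  have R0: "(\<Sum>r\<in>R. exc z1 r) = 0" "(\<Sum>r\<in>R. exc z2 r) = 0" using sum_exc_row_eq_0 z1 z2 by blast+
  have Ry: "(\<Sum>r\<in>R. exc y1 r) \<le> sum x R" "(\<Sum>r\<in>R. exc y2 r) \<le> sum x R" using sum_exc_R_le inN by auto
  consider "\<forall>r\<in>R. \<not> E y1 r" | "\<forall>r\<in>R. \<not> E y2 r" | r0 r3 where "r0 \<in> R" "E y1 r0" "r3 \<in> R" "E y2 r3"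
    by blast
  then show ?thesis
  proof cases
    case 1
    then have "(\<Sum>r\<in>R. exc y1 r) = 0" using sum_exc_row_eq_0 by blast
    then show ?thesis using total_excess_split4 sum_x_split4 R0 Ry exc_six_le x_bounds4 sum_x_R_gt weight_big
      by linarith
  next
    case 2
    then have "(\<Sum>r\<in>R. exc y2 r) = 0" using sum_exc_row_eq_0 by blast
    then show ?thesis using total_excess_split4 sum_x_split4 R0 Ry exc_six_le x_bounds4 sum_x_R_gt weight_big
      by linarith
  next
    case 3
    have a1: "\<forall>r\<in>R. E y1 r \<longrightarrow> r = r3" using together 3 by blast
    have a2: "\<forall>r\<in>R. E y2 r \<longrightarrow> r = r3" using together 3 a1 by metis
    have "(\<Sum>r\<in>R. exc y1 r) \<le> 1" "(\<Sum>r\<in>R. exc y2 r) \<le> 1"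
      using sum_exc_row_le_1[OF inN(1) R_subset a1] sum_exc_row_le_1[OF inN(3) R_subset a2] by auto
    then show ?thesis using total_excess_split4 sum_x_split4 R0 exc_six_le x_bounds4 sum_x_R_gt weight_big
      by linarith
  qed
qed

lemma bound_with_equality_if_hanging:
  assumes "\<forall>r\<in>R. \<not> E z1 r" and "\<forall>r\<in>R. \<not> E z2 r"
  shows bound_with_equality
  using bound_with_equality_if_hanging_apart[OF assms] total_excess_lt_if_hanging_together[OF assms]
    bound_with_equalityI by blast

lemma total_excess_lt_if_hanging_triangle:
  assumes z1: "\<forall>r\<in>R. \<not> E z1 r"
    and y2: "\<forall>r\<in>R. E y2 r \<longrightarrow> r = r2" and z2: "\<forall>r\<in>R. E z2 r \<longrightarrow> r = r2"
    and r2: "r2 \<in> R" "E y2 r2" "E z2 r2"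
  shows "total_excess < 4 * sum x N - 6"
proof -
  have R2: "(\<Sum>r\<in>R. exc y2 r) \<le> 1" "(\<Sum>r\<in>R. exc z2 r) \<le> 1"
    using sum_exc_row_le_1[OF inN(3) R_subset y2] sum_exc_row_le_1[OF inN(4) R_subset z2] by auto
  have R1: "(\<Sum>r\<in>R. exc z1 r) = 0" using sum_exc_row_eq_0 z1 by blast
  show ?thesis
  proof (cases "\<forall>r\<in>R. E y1 r \<longrightarrow> r = r2")
    case True
    then have "(\<Sum>r\<in>R. exc y1 r) \<le> 1" using sum_exc_row_le_1[OF inN(1) R_subset] by blast
    then show ?thesis using total_excess_split4 exc_six_le weight_big x_bounds4 R1 R2 by linarith
  next
    case False
    then obtain r where r: "r \<in> R" "E y1 r" "r \<noteq> r2" by blast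
    have "\<not> E z1 z2"
      using no_three_disjoint_edgesD[OF matching inN(1) _ inN(3) _ inN(2) inN(4), of r r2] r r2 dist by auto
    moreover have "\<not> E z1 y2"
      using no_three_disjoint_edgesD[OF matching inN(1) _ inN(4) _ inN(2) inN(3), of r r2] r r2 dist by auto
    ultimately have "exc z1 z2 = 0" "exc z1 y2 = 0" by (auto simp: excess_def)
    moreover have "exc y1 z1 + exc y1 y2 + exc y1 z2 + exc y2 z2 \<le> x y1 + x z1 + x y2 + x z2 + 1 / 2"
      using exc_le_mean[OF inN(1) inN(2)] exc_le_mean[OF inN(1) inN(3)] exc_le_mean[OF inN(1) inN(4)]
        exc_le_mean[OF inN(3) inN(4)] x_bounds4 by linarith
    moreover have "(\<Sum>r\<in>R. exc y1 r) \<le> sum x R" using sum_exc_R_le inN by auto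
    ultimately show ?thesis using total_excess_split4 weight_big x_bounds4 R1 R2 sum_x_split4 by linarith
  qed
qed

lemma total_excess_lt_if_two_triangles:
  assumes "\<forall>r\<in>R. E y1 r \<longrightarrow> r = r1" "\<forall>r\<in>R. E z1 r \<longrightarrow> r = r1"
    "\<forall>r\<in>R. E y2 r \<longrightarrow> r = r2" "\<forall>r\<in>R. E z2 r \<longrightarrow> r = r2"
  shows "total_excess < 4 * sum x N - 6"
proof -
  have "(\<Sum>r\<in>R. exc y1 r) \<le> 1" "(\<Sum>r\<in>R. exc z1 r) \<le> 1" "(\<Sum>r\<in>R. exc y2 r) \<le> 1" "(\<Sum>r\<in>R. exc z2 r) \<le> 1"
    using sum_exc_row_le_1[OF inN(1) R_subset assms(1)] sum_exc_row_le_1[OF inN(2) R_subset assms(2)]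
      sum_exc_row_le_1[OF inN(3) R_subset assms(3)] sum_exc_row_le_1[OF inN(4) R_subset assms(4)] by auto
  then show ?thesis using total_excess_split4 exc_six_le weight_big x_bounds4 by linarith
qed

lemma edge_kinds:
  "(\<forall>r\<in>R. \<not> E z1 r) \<or> (\<forall>r\<in>R. \<not> E y1 r) \<or>
   (\<exists>r1\<in>R. E y1 r1 \<and> E z1 r1 \<and> (\<forall>r\<in>R. E y1 r \<longrightarrow> r = r1) \<and> (\<forall>r\<in>R. E z1 r \<longrightarrow> r = r1))"
proof (cases "(\<forall>r\<in>R. \<not> E z1 r) \<or> (\<forall>r\<in>R. \<not> E y1 r)")
  case False
  then obtain ra rb where ra: "ra \<in> R" "E z1 ra" and rb: "rb \<in> R" "E y1 rb" by blast
  then have "rb = ra" using R_nbr_y1_z1_eq by blast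
  then show ?thesis using ra rb R_nbr_y1_z1_eq by blast
qed blast

end


lemma bound_with_equality_of_two_disjoint_edges:
  assumes inN: "y1 \<in> N" "z1 \<in> N" "y2 \<in> N" "z2 \<in> N" and dist: "distinct [y1, z1, y2, z2]"
    and e1: "E y1 z1" and e2: "E y2 z2"
  shows bound_with_equality
proof -
  let ?R = "N - {y1, z1, y2, z2}"
  have e1': "E z1 y1" and e2': "E z2 y2" using e1 e2 sym by blast+
  have d: "distinct [y2, z2, y1, z1]" "distinct [z1, y1, y2, z2]" "distinct [y1, z1, z2, y2]"
    "distinct [z1, y1, z2, y2]" "distinct [z2, y2, y1, z1]"
    using dist by auto
  have R: "N - {z1, y1, y2, z2} = ?R" "N - {y1, z1, z2, y2} = ?R" "N - {z1, y1, z2, y2} = ?R"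
    "N - {y2, z2, y1, z1} = ?R" "N - {z2, y2, y1, z1} = ?R"
    by auto
  note hanging = bound_with_equality_if_hanging[OF inN dist e1 e2]
    bound_with_equality_if_hanging[OF inN(2,1,3,4) d(2) e1' e2, unfolded R]
    bound_with_equality_if_hanging[OF inN(1,2,4,3) d(3) e1 e2', unfolded R]
    bound_with_equality_if_hanging[OF inN(2,1,4,3) d(4) e1' e2', unfolded R]
  note hanging_triangle = total_excess_lt_if_hanging_triangle[OF inN dist e1 e2]
    total_excess_lt_if_hanging_triangle[OF inN(2,1,3,4) d(2) e1' e2, unfolded R]
    total_excess_lt_if_hanging_triangle[OF inN(3,4,1,2) d(1) e2 e1, unfolded R]
    total_excess_lt_if_hanging_triangle[OF inN(4,3,1,2) d(5) e2' e1, unfolded R]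
  note two_triangles = total_excess_lt_if_two_triangles[OF inN dist e1 e2]
  have kinds2: "(\<forall>r\<in>?R. \<not> E z2 r) \<or> (\<forall>r\<in>?R. \<not> E y2 r) \<or>
   (\<exists>r2\<in>?R. E y2 r2 \<and> E z2 r2 \<and> (\<forall>r\<in>?R. E y2 r \<longrightarrow> r = r2) \<and> (\<forall>r\<in>?R. E z2 r \<longrightarrow> r = r2))"
    using edge_kinds[OF inN(3,4,1,2) d(1) e2 e1] unfolding R .
  from edge_kinds[OF inN dist e1 e2] show ?thesis
  proof (elim disjE)
    assume h1: "\<forall>r\<in>?R. \<not> E z1 r"
    from kinds2 show ?thesis
    proof (elim disjE bexE conjE)
      assume "\<forall>r\<in>?R. \<not> E z2 r" then show ?thesis using hanging(1) h1 by blast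
    next
      assume "\<forall>r\<in>?R. \<not> E y2 r" then show ?thesis using hanging(3) h1 by blast
    next
      fix r2 assume "r2 \<in> ?R" "E y2 r2" "E z2 r2" "\<forall>r\<in>?R. E y2 r \<longrightarrow> r = r2" "\<forall>r\<in>?R. E z2 r \<longrightarrow> r = r2"
      then show ?thesis using hanging_triangle(1) h1 bound_with_equalityI by blast
    qed
  next
    assume h1: "\<forall>r\<in>?R. \<not> E y1 r"
    from kinds2 show ?thesis
    proof (elim disjE bexE conjE)
      assume "\<forall>r\<in>?R. \<not> E z2 r" then show ?thesis using hanging(2) h1 by blast
    next
      assume "\<forall>r\<in>?R. \<not> E y2 r" then show ?thesis using hanging(4) h1 by blast
    next
      fix r2 assume "r2 \<in> ?R" "E y2 r2" "E z2 r2" "\<forall>r\<in>?R. E y2 r \<longrightarrow> r = r2" "\<forall>r\<in>?R. E z2 r \<longrightarrow> r = r2"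
      then show ?thesis using hanging_triangle(2) h1 bound_with_equalityI by blast
    qed
  next
    assume "\<exists>r1\<in>?R. E y1 r1 \<and> E z1 r1 \<and> (\<forall>r\<in>?R. E y1 r \<longrightarrow> r = r1) \<and> (\<forall>r\<in>?R. E z1 r \<longrightarrow> r = r1)"
    then obtain r1 where h1: "r1 \<in> ?R" "E y1 r1" "E z1 r1" "\<forall>r\<in>?R. E y1 r \<longrightarrow> r = r1"
      "\<forall>r\<in>?R. E z1 r \<longrightarrow> r = r1" by blast
    from kinds2 show ?thesis
    proof (elim disjE bexE conjE)
      assume "\<forall>r\<in>?R. \<not> E z2 r" then show ?thesis using hanging_triangle(3) h1 bound_with_equalityI by blast
    next
      assume "\<forall>r\<in>?R. \<not> E y2 r" then show ?thesis using hanging_triangle(4) h1 bound_with_equalityI by blast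
    next
      fix r2 assume "r2 \<in> ?R" "E y2 r2" "E z2 r2" "\<forall>r\<in>?R. E y2 r \<longrightarrow> r = r2" "\<forall>r\<in>?R. E z2 r \<longrightarrow> r = r2"
      then show ?thesis using two_triangles h1 bound_with_equalityI by blast
    qed
  qed
qed

lemma total_excess_lt_without_two_disjoint_edges:
  assumes no2: "\<not> (\<exists>y1 z1 y2 z2. y1 \<in> N \<and> z1 \<in> N \<and> y2 \<in> N \<and> z2 \<in> N \<and> distinct [y1, z1, y2, z2]
    \<and> E y1 z1 \<and> E y2 z2)"
  shows "total_excess < 4 * sum x N - 6"
proof (cases "\<exists>p\<in>N. \<exists>q\<in>N. E p q")
  case False
  then have "total_excess = 0" by (auto simp: excess_def intro!: sum.neutral)
  then show ?thesis using weight_big by linarith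
next
  case True
  then obtain p q where p: "p \<in> N" and q: "q \<in> N" and e: "E p q" by blast
  have pq: "p \<noteq> q" using e irrefl by auto
  let ?R = "N - {p, q}"
  have RN: "?R \<subseteq> N" by auto
  have one: "r = r'" if "r \<in> ?R" "r' \<in> ?R" "E p r" "E q r'" for r r'
    using no2 p q pq that by (metis DiffE distinct_length_2_or_more distinct_singleton insertCI)
  have "total_excess = (\<Sum>v\<in>{p, q}. \<Sum>w\<in>{p, q}. exc v w) + 2 * (\<Sum>v\<in>{p, q}. \<Sum>r\<in>?R. exc v r)"
  proof (rule sum_excess_split[OF fin _ sym])
    show "\<forall>v\<in>?R. \<forall>w\<in>?R. \<not> E v w"
    proof (intro ballI notI)
      fix v w assume "v \<in> ?R" "w \<in> ?R" "E v w"
      moreover have "v \<noteq> w" using \<open>E v w\<close> irrefl by auto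
      ultimately show False using no2 p q pq e by (metis DiffE distinct_length_2_or_more
          distinct_singleton insertCI)
    qed
  qed (use p q in auto)
  then have split: "total_excess = 2 * exc p q + 2 * (\<Sum>r\<in>?R. exc p r) + 2 * (\<Sum>r\<in>?R. exc q r)"
    using sum_exc_two[OF pq] pq by simp
  have X: "sum x N = x p + x q + sum x ?R" using sum_x_split[of "{p, q}"] p q pq by simp
  have xs: "0 \<le> x p" "x p \<le> 1" "0 \<le> x q" "x q \<le> 1" using x_nonneg x_le_1 p q by auto
  have "exc p q \<le> 1" using exc_le_1[OF p q] .
  moreover have "(\<Sum>r\<in>?R. exc p r) \<le> sum x ?R" "(\<Sum>r\<in>?R. exc q r) \<le> sum x ?R"
    using sum_exc_row_le_weight[OF p RN] sum_exc_row_le_weight[OF q RN] .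
  moreover have "(\<Sum>r\<in>?R. exc p r) = 0 \<or> (\<Sum>r\<in>?R. exc q r) = 0 \<or>
      ((\<Sum>r\<in>?R. exc p r) \<le> 1 \<and> (\<Sum>r\<in>?R. exc q r) \<le> 1)"
  proof (cases "(\<forall>r\<in>?R. \<not> E p r) \<or> (\<forall>r\<in>?R. \<not> E q r)")
    case True then show ?thesis using sum_exc_row_eq_0 by blast
  next
    case False
    then obtain ra rb where "ra \<in> ?R" "E q ra" "rb \<in> ?R" "E p rb" by blast
    then have "\<forall>r\<in>?R. E p r \<longrightarrow> r = rb" "\<forall>r\<in>?R. E q r \<longrightarrow> r = ra" using one by blast+
    then show ?thesis using sum_exc_row_le_1[OF p RN] sum_exc_row_le_1[OF q RN] by blast
  qed
  ultimately show ?thesis using split X xs weight_big sum_x_nonneg[OF RN] by linarith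
qed

lemma total_excess_bound: bound_with_equality
proof (cases "\<exists>y1 z1 y2 z2. y1 \<in> N \<and> z1 \<in> N \<and> y2 \<in> N \<and> z2 \<in> N \<and> distinct [y1, z1, y2, z2]
    \<and> E y1 z1 \<and> E y2 z2")
  case True
  then show ?thesis using bound_with_equality_of_two_disjoint_edges by blast
next
  case False
  then show ?thesis using total_excess_lt_without_two_disjoint_edges bound_with_equalityI by blast
qed

lemma total_excess_le: "total_excess \<le> 4 * sum x N - 6"
  using total_excess_bound unfolding bound_with_equality_def by blast

lemma unit_spine_book_of_total_excess_eq:
  "\<forall>v\<in>N. 0 < x v \<Longrightarrow> total_excess = 4 * sum x N - 6 \<Longrightarrow> unit_spine_book N E x"
  using total_excess_bound unfolding bound_with_equality_def by blast

end

section \<open>The spectral radius of an \<open>F\<^sub>3\<close>-free graph\<close>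

lemma bij_betw_three_first:
  assumes "finite T" "distinct [u, a, b]" "u \<notin> T" "a \<notin> T" "b \<notin> T"
  obtains f where "bij_betw f (insert u (insert a (insert b T))) {..<card T + 3}"
    "f u = 0" "f a = 1" "f b = 2" "\<forall>i\<in>T. 3 \<le> f i"
proof -
  define t where "t = card T"
  obtain g where g: "bij_betw g T {3..<t + 3}"
    using finite_same_card_bij[of T "{3..<t + 3}"] assms(1) unfolding t_def by auto
  define f where "f i = (if i = u then 0 else if i = a then 1 else if i = b then 2 else g i)" for i
  define h where "h k = (if k = 0 then u else if k = 1 then a else if k = 2 then b else inv_into T g k)" for k
  have f_T: "f i = g i" "3 \<le> g i \<and> g i < t + 3" if "i \<in> T" for i
    using that g assms(3-5) unfolding f_def bij_betw_def by auto
  have inv: "inv_into T g k \<in> T" "g (inv_into T g k) = k" if "k \<in> {3..<t + 3}" for k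
    using that g by (auto simp: bij_betw_def inv_into_into f_inv_into_f)
  have "bij_betw f (insert u (insert a (insert b T))) {..<t + 3}"
  proof (rule bij_betw_byWitness[where f' = h])
    show "\<forall>i\<in>insert u (insert a (insert b T)). h (f i) = i"
    proof
      fix i assume i: "i \<in> insert u (insert a (insert b T))"
      show "h (f i) = i"
      proof (cases "i \<in> {u, a, b}")
        case True then show ?thesis using assms(2) by (auto simp: f_def h_def)
      next
        case False
        then have "i \<in> T" using i by auto
        then have "f i = g i" "3 \<le> g i" using f_T[of i] by auto
        then show ?thesis using \<open>i \<in> T\<close> g by (simp add: bij_betw_def h_def)
      qed
    qed
    show "\<forall>k\<in>{..<t + 3}. f (h k) = k"
    proof
      fix k assume k: "k \<in> {..<t + 3}"
      show "f (h k) = k"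
      proof (cases "k < 3")
        case True then show ?thesis using assms(2) by (auto simp: f_def h_def)
      next
        case False
        then have "inv_into T g k \<in> T" "g (inv_into T g k) = k" using inv k by auto
        moreover have "inv_into T g k \<notin> {u, a, b}" using calculation(1) assms(3-5) by auto
        ultimately show ?thesis using False by (auto simp: f_def h_def)
      qed
    qed
    show "f ` insert u (insert a (insert b T)) \<subseteq> {..<t + 3}" using f_T by (auto simp: f_def)
    show "h ` {..<t + 3} \<subseteq> insert u (insert a (insert b T))" using inv by (auto simp: h_def)
  qed
  moreover have "f u = 0" "f a = 1" "f b = 2" "\<forall>i\<in>T. 3 \<le> f i" using assms(2) f_T by (auto simp: f_def)
  ultimately show ?thesis using that unfolding t_def by blast
qed

lemma non_isolated_K3_join_edge: "non_isolated (t + 3) (K3_join_edge t) = {..<t + 3}"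
proof -
  have "K3_join_edge t k (if k = 0 then 1 else 0)" if "k < t + 3" for k
    using that unfolding K3_join_edge_def by auto
  then show ?thesis unfolding non_isolated_def by (auto simp: K3_join_edge_def)
qed

text \<open>On \<open>K\<^sub>3 \<or> tK\<^sub>1\<close> the vector with entries \<open>1\<close> on the triangle and \<open>3 / L\<close> elsewhere is an eigenvector
  for the root \<open>L = 1 + sqrt (3 t + 1)\<close> of \<open>L\<^sup>2 = 2 L + 3 t\<close>.\<close>

lemma K3_join_edge_eigenvector:
  fixes L :: real
  assumes L: "L > 0" "L * L = 2 * L + 3 * real t" and c: "c < t + 3"
  shows "(\<Sum>k<t + 3. (if K3_join_edge t c k then 1 else 0) * (if k < 3 then 1 else 3 / L)) =
    L * (if c < 3 then 1 else 3 / L)"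
proof -
  define h where "h k = (if K3_join_edge t c k then 1 else 0) * (if k < 3 then 1 else 3 / L)" for k
  have "{..<t + 3} = {0, 1, 2} \<union> {3..<t + 3}" by auto
  then have sum: "(\<Sum>k<t + 3. h k) = h 0 + h 1 + h 2 + (\<Sum>k\<in>{3..<t + 3}. h k)"
    by (simp add: sum.union_disjoint)
  show ?thesis
  proof (cases "c < 3")
    case True
    have "(\<Sum>k\<in>{3..<t + 3}. h k) = real t * (3 / L)"
      using True c by (simp add: h_def K3_join_edge_def)
    moreover have "h 0 + h 1 + h 2 = 2"
      using True c unfolding h_def K3_join_edge_def by (cases "c = 0"; cases "c = 1"; auto)
    moreover have "2 + real t * (3 / L) = L"
      using L by (simp add: field_simps)
    ultimately show ?thesis using sum True unfolding h_def by simp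
  next
    case False
    have "(\<Sum>k\<in>{3..<t + 3}. h k) = 0" using False by (simp add: h_def K3_join_edge_def)
    moreover have "h 0 + h 1 + h 2 = 3" using False c unfolding h_def K3_join_edge_def by auto
    ultimately show ?thesis using sum False L unfolding h_def by simp
  qed
qed

context finite_graph
begin

lemma no_three_disjoint_edges_nbhd:
  assumes "F_free 3 n E" and "u < n"
  shows "no_three_disjoint_edges (nbhd u) E"
  unfolding no_three_disjoint_edges_def
proof
  assume "\<exists>a1 b1 a2 b2 a3 b3. a1 \<in> nbhd u \<and> b1 \<in> nbhd u \<and> a2 \<in> nbhd u \<and> b2 \<in> nbhd u \<and>
      a3 \<in> nbhd u \<and> b3 \<in> nbhd u \<and> distinct [a1, b1, a2, b2, a3, b3] \<and> E a1 b1 \<and> E a2 b2 \<and> E a3 b3"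
  then obtain a1 b1 a2 b2 a3 b3 where m: "a1 < n" "E u a1" "b1 < n" "E u b1" "a2 < n" "E u a2"
    "b2 < n" "E u b2" "a3 < n" "E u a3" "b3 < n" "E u b3" and d: "distinct [a1, b1, a2, b2, a3, b3]"
    and e: "E a1 b1" "E a2 b2" "E a3 b3" by (auto simp: mem_nbhd)
  have "u \<noteq> a1" "u \<noteq> b1" "u \<noteq> a2" "u \<noteq> b2" "u \<noteq> a3" "u \<noteq> b3" using m edge_irrefl by auto
  then have "distinct [u, a1, b1, a2, b2, a3, b3]" using d by auto
  then show False using F_free_3_no_three_triangles[OF assms(1)] edge_sym m e assms(2) by blast
qed

lemma adj_real_nbhd: "v \<in> nbhd u \<Longrightarrow> adj_real E u v = 1 \<and> adj_real E v u = 1"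
  using edge_sym by (auto simp: adj_real_def mem_nbhd)

lemma adj_real_far: "w \<in> far u \<Longrightarrow> adj_real E u w = 0 \<and> adj_real E w u = 0"
  using edge_sym by (auto simp: adj_real_def mem_far)

lemma sum_excess_eq:
  assumes "finite S"
  shows "(\<Sum>v\<in>S. \<Sum>w\<in>S. excess E x v w) =
    2 * (\<Sum>v\<in>S. \<Sum>w\<in>S. adj_real E v w * x w) - (\<Sum>v\<in>S. \<Sum>w\<in>S. adj_real E v w)"
proof -
  have "excess E x v w = adj_real E v w * x v + adj_real E v w * x w - adj_real E v w" for v w
    unfolding excess_def adj_real_def by auto
  moreover have "(\<Sum>v\<in>S. \<Sum>w\<in>S. adj_real E v w * x v) = (\<Sum>v\<in>S. \<Sum>w\<in>S. adj_real E v w * x w)"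
    by (subst sum.swap) (simp add: adj_real_sym)
  ultimately show ?thesis by (simp add: sum.distrib sum_subtractf)
qed

lemma twice_num_edges_split:
  assumes u: "u < n"
  shows "2 * real (num_edges n E) = 2 * real (card (nbhd u)) + (\<Sum>v\<in>nbhd u. \<Sum>w\<in>nbhd u. adj_real E v w)
    + 2 * (\<Sum>v\<in>nbhd u. \<Sum>w\<in>far u. adj_real E v w) + (\<Sum>v\<in>far u. \<Sum>w\<in>far u. adj_real E v w)"
proof -
  note split = sum_vertices_split[OF u]
  have row_u: "(\<Sum>j<n. adj_real E u j) = real (card (nbhd u))"
    unfolding split using adj_real_nbhd adj_real_far by (simp add: adj_real_def edge_irrefl)
  have row_N: "(\<Sum>j<n. adj_real E v j) = 1 + (\<Sum>w\<in>nbhd u. adj_real E v w) + (\<Sum>w\<in>far u. adj_real E v w)"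
    if "v \<in> nbhd u" for v
    unfolding split using adj_real_nbhd[OF that] by simp
  have row_B: "(\<Sum>j<n. adj_real E v j) = (\<Sum>w\<in>nbhd u. adj_real E v w) + (\<Sum>w\<in>far u. adj_real E v w)"
    if "v \<in> far u" for v
    unfolding split using adj_real_far[OF that] by simp
  have swap: "(\<Sum>v\<in>far u. \<Sum>w\<in>nbhd u. adj_real E v w) = (\<Sum>v\<in>nbhd u. \<Sum>w\<in>far u. adj_real E v w)"
    by (subst sum.swap) (simp add: adj_real_sym)
  have "2 * real (num_edges n E) = (\<Sum>j<n. adj_real E u j) + (\<Sum>i\<in>nbhd u. \<Sum>j<n. adj_real E i j)
      + (\<Sum>i\<in>far u. \<Sum>j<n. adj_real E i j)"
    unfolding sum_adj_real[symmetric] by (rule split)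
  also have "\<dots> = real (card (nbhd u)) + (real (card (nbhd u)) + (\<Sum>v\<in>nbhd u. \<Sum>w\<in>nbhd u. adj_real E v w)
      + (\<Sum>v\<in>nbhd u. \<Sum>w\<in>far u. adj_real E v w))
      + ((\<Sum>v\<in>far u. \<Sum>w\<in>nbhd u. adj_real E v w) + (\<Sum>v\<in>far u. \<Sum>w\<in>far u. adj_real E v w))"
    unfolding row_u using row_N row_B by (simp add: sum.distrib)
  finally show ?thesis unfolding swap by simp
qed

text \<open>The graph is \<open>K\<^sub>3 \<or> tK\<^sub>1\<close> plus isolated vertices, with triangle \<open>{u, a, b}\<close> and \<open>t = |nbhd u| - 2\<close>.\<close>

definition K3_join_at :: "nat \<Rightarrow> nat \<Rightarrow> nat \<Rightarrow> bool" where
  "K3_join_at u a b \<longleftrightarrow> a \<in> nbhd u \<and> b \<in> nbhd u \<and> a \<noteq> b \<and>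
     (\<forall>i j. E i j \<longleftrightarrow> i \<in> insert u (nbhd u) \<and> j \<in> insert u (nbhd u) \<and> i \<noteq> j \<and>
        (i \<in> {u, a, b} \<or> j \<in> {u, a, b}))"

context
  fixes x :: "nat \<Rightarrow> real" and r :: real
  assumes x01: "\<forall>i<n. 0 \<le> x i \<and> x i \<le> 1"
    and eig: "\<forall>i<n. (\<Sum>j<n. adj_real E i j * x j) = r * x i"
begin

lemma radius_eq_sum_nbhd:
  assumes "u < n" "x u = 1"
  shows "r = sum x (nbhd u)"
proof -
  have "r = (\<Sum>j<n. adj_real E u j * x j)" using eig assms by simp
  also have "\<dots> = sum x (nbhd u)"
    unfolding sum_vertices_split[OF assms(1)] using adj_real_nbhd adj_real_far by (simp add: adj_real_def edge_irrefl)
  finally show ?thesis .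
qed

lemma eigen_row_nbhd:
  assumes "u < n" "x u = 1" "v \<in> nbhd u"
  shows "r * x v = 1 + (\<Sum>w\<in>nbhd u. adj_real E v w * x w) + (\<Sum>w\<in>far u. adj_real E v w * x w)"
  using eig sum_vertices_split[OF assms(1), of "\<lambda>j. adj_real E v j * x j"] adj_real_nbhd[OF assms(3)] assms
  by (simp add: mem_nbhd)

lemma radius_sq_split:
  assumes "u < n" "x u = 1"
  shows "r\<^sup>2 = real (card (nbhd u)) + (\<Sum>v\<in>nbhd u. \<Sum>w\<in>nbhd u. adj_real E v w * x w)
    + (\<Sum>v\<in>nbhd u. \<Sum>w\<in>far u. adj_real E v w * x w)"
proof -
  have "r\<^sup>2 = (\<Sum>v\<in>nbhd u. r * x v)"
    unfolding power2_eq_square using radius_eq_sum_nbhd[OF assms] by (simp add: sum_distrib_left)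
  also have "\<dots> = (\<Sum>v\<in>nbhd u. 1 + (\<Sum>w\<in>nbhd u. adj_real E v w * x w) + (\<Sum>w\<in>far u. adj_real E v w * x w))"
    using eigen_row_nbhd[OF assms] by simp
  finally show ?thesis by (simp add: sum.distrib)
qed

lemma radius_identity:
  assumes "u < n" "x u = 1"
  shows "2 * (r\<^sup>2 - 2 * r - (real (num_edges n E) - 3)) =
    ((\<Sum>v\<in>nbhd u. \<Sum>w\<in>nbhd u. excess E x v w) - (4 * sum x (nbhd u) - 6))
    - 2 * (\<Sum>v\<in>nbhd u. \<Sum>w\<in>far u. adj_real E v w * (1 - x w)) - (\<Sum>v\<in>far u. \<Sum>w\<in>far u. adj_real E v w)"
proof -
  have "(\<Sum>v\<in>nbhd u. \<Sum>w\<in>far u. adj_real E v w * (1 - x w)) =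
      (\<Sum>v\<in>nbhd u. \<Sum>w\<in>far u. adj_real E v w) - (\<Sum>v\<in>nbhd u. \<Sum>w\<in>far u. adj_real E v w * x w)"
    by (simp add: sum_subtractf algebra_simps)
  then show ?thesis
    using radius_sq_split[OF assms] twice_num_edges_split[OF assms(1)] radius_eq_sum_nbhd[OF assms]
      sum_excess_eq[of "nbhd u" x]
    by (simp add: field_simps)
qed

context
  fixes u
  assumes F3: "F_free 3 n E" and u: "u < n" and xu: "x u = 1" and r_big: "r > 13 / 2"
begin

interpretation nbhd: matching_two_weights "nbhd u" E x
proof
  show "\<forall>i j. E i j \<longrightarrow> E j i" "\<forall>i. \<not> E i i" using edge_sym edge_irrefl by blast+
  show "no_three_disjoint_edges (nbhd u) E" by (rule no_three_disjoint_edges_nbhd[OF F3 u])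
  show "\<forall>v\<in>nbhd u. 0 \<le> x v" "\<forall>v\<in>nbhd u. x v \<le> 1" using x01 by (auto simp: mem_nbhd)
  show "13 / 2 < sum x (nbhd u)" using radius_eq_sum_nbhd[OF u xu] r_big by simp
qed simp

lemma far_slack_nonneg:
  "0 \<le> (\<Sum>v\<in>nbhd u. \<Sum>w\<in>far u. adj_real E v w * (1 - x w))"
  "0 \<le> (\<Sum>v\<in>far u. \<Sum>w\<in>far u. adj_real E v w)"
  using x01 by (auto simp: mem_far adj_real_nonneg intro!: sum_nonneg mult_nonneg_nonneg)

lemma radius_bound: "r\<^sup>2 - 2 * r \<le> real (num_edges n E) - 3"
proof -
  have "2 * (r\<^sup>2 - 2 * r - (real (num_edges n E) - 3)) \<le> 0"
    using radius_identity[OF u xu] nbhd.total_excess_le far_slack_nonneg by linarith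
  then show ?thesis by simp
qed

lemma extremal_sums:
  assumes eq: "r\<^sup>2 - 2 * r = real (num_edges n E) - 3"
  shows "(\<Sum>v\<in>nbhd u. \<Sum>w\<in>nbhd u. excess E x v w) = 4 * sum x (nbhd u) - 6"
    and "(\<Sum>v\<in>nbhd u. \<Sum>w\<in>far u. adj_real E v w * (1 - x w)) = 0"
    and "(\<Sum>v\<in>far u. \<Sum>w\<in>far u. adj_real E v w) = 0"
proof -
  have "2 * (r\<^sup>2 - 2 * r - (real (num_edges n E) - 3)) = 0" using eq by simp
  then show "(\<Sum>v\<in>nbhd u. \<Sum>w\<in>nbhd u. excess E x v w) = 4 * sum x (nbhd u) - 6"
    and "(\<Sum>v\<in>nbhd u. \<Sum>w\<in>far u. adj_real E v w * (1 - x w)) = 0"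
    and "(\<Sum>v\<in>far u. \<Sum>w\<in>far u. adj_real E v w) = 0"
    using radius_identity[OF u xu] nbhd.total_excess_le far_slack_nonneg by linarith+
qed

lemma extremal_unit_spine_book:
  assumes eq: "r\<^sup>2 - 2 * r = real (num_edges n E) - 3"
  shows "unit_spine_book (nbhd u) E x"
proof -
  have "0 < x v" if v: "v \<in> nbhd u" for v
  proof -
    have "0 \<le> (\<Sum>w\<in>nbhd u. adj_real E v w * x w)" "0 \<le> (\<Sum>w\<in>far u. adj_real E v w * x w)"
      using x01 by (auto simp: mem_nbhd mem_far adj_real_nonneg intro!: sum_nonneg mult_nonneg_nonneg)
    then have "1 \<le> r * x v" using eigen_row_nbhd[OF u xu v] by linarith
    then show ?thesis using r_big x01 v by (cases "x v = 0") (auto simp: mem_nbhd)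
  qed
  then show ?thesis using nbhd.unit_spine_book_of_total_excess_eq extremal_sums(1)[OF eq] by blast
qed

lemma extremal_far_weight:
  assumes eq: "r\<^sup>2 - 2 * r = real (num_edges n E) - 3"
    and "v \<in> nbhd u" "w \<in> far u" "E v w"
  shows "x w = 1"
proof -
  have nonneg: "0 \<le> adj_real E v w * (1 - x w)" if "w \<in> far u" for v w
    using x01 that by (auto simp: mem_far adj_real_nonneg)
  have "(\<Sum>w\<in>far u. adj_real E v w * (1 - x w)) = 0"
    using extremal_sums(2)[OF eq] assms(2) nonneg
      sum_nonneg_eq_0_iff[of "nbhd u" "\<lambda>v. \<Sum>w\<in>far u. adj_real E v w * (1 - x w)"]
    by (simp add: sum_nonneg)
  then have "adj_real E v w * (1 - x w) = 0"
    using assms(3) nonneg sum_nonneg_eq_0_iff[of "far u" "\<lambda>w. adj_real E v w * (1 - x w)"] by simp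
  then show ?thesis using assms(4) by (simp add: adj_real_def)
qed

lemma extremal_far_independent:
  assumes eq: "r\<^sup>2 - 2 * r = real (num_edges n E) - 3"
    and "v \<in> far u" "w \<in> far u"
  shows "\<not> E v w"
proof -
  have "(\<Sum>w\<in>far u. adj_real E v w) = 0"
    using extremal_sums(3)[OF eq] assms(2) sum_nonneg_eq_0_iff[of "far u" "\<lambda>v. \<Sum>w\<in>far u. adj_real E v w"]
    by (simp add: sum_nonneg adj_real_nonneg)
  then have "adj_real E v w = 0"
    using assms(3) sum_nonneg_eq_0_iff[of "far u" "adj_real E v"] by (simp add: adj_real_nonneg)
  then show ?thesis by (simp add: adj_real_def split: if_splits)
qed


end


context
  assumes F3: "F_free 3 n E" and r_big: "r > 13 / 2"
    and eq: "r\<^sup>2 - 2 * r = real (num_edges n E) - 3"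
begin

lemma card_nbhd_ge_7: "u < n \<Longrightarrow> x u = 1 \<Longrightarrow> 7 \<le> card (nbhd u)"
  using degree_ge_eigenvalue[of u x r] x01 eig r_big by fastforce

lemma nbhd_subset_if_far:
  assumes u: "u < n" and xu: "x u = 1" and w: "w \<in> far u"
  shows "nbhd w \<subseteq> nbhd u"
proof
  fix z assume "z \<in> nbhd w"
  then have z: "z < n" "E w z" by (auto simp: mem_nbhd)
  have "z \<noteq> u" using z(2) w edge_sym by (auto simp: mem_far)
  moreover have "z \<notin> far u" using extremal_far_independent[OF F3 u xu r_big eq w] z(2) by blast
  ultimately show "z \<in> nbhd u" using z(1) by (auto simp: mem_far mem_nbhd)
qed

text \<open>An edge from \<open>nbhd u\<close> to \<open>far u\<close> would yield a copy of \<open>F\<^sub>3\<close> centred at a spine vertex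
  of the book on \<open>nbhd u\<close>.\<close>

lemma no_edge_nbhd_far:
  assumes u: "u < n" and xu: "x u = 1" and v: "v \<in> nbhd u" and w: "w \<in> far u"
  shows "\<not> E v w"
proof
  assume vw: "E v w"
  have wn: "w < n" and xw: "x w = 1" using w extremal_far_weight[OF F3 u xu r_big eq v w vw] by (auto simp: mem_far)
  obtain a b where ab: "a \<in> nbhd u" "b \<in> nbhd u" "a \<noteq> b"
    and book: "\<forall>v\<in>nbhd u. \<forall>z\<in>nbhd u. E v z \<longleftrightarrow> v \<noteq> z \<and> (v = a \<or> v = b \<or> z = a \<or> z = b)"
    using extremal_unit_spine_book[OF F3 u xu r_big eq] unfolding unit_spine_book_def by blast
  obtain a' b' where ab': "a' \<in> nbhd w" "b' \<in> nbhd w" "a' \<noteq> b'"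
    and book': "\<forall>v\<in>nbhd w. \<forall>z\<in>nbhd w. E v z \<longleftrightarrow> v \<noteq> z \<and> (v = a' \<or> v = b' \<or> z = a' \<or> z = b')"
    using extremal_unit_spine_book[OF F3 wn xw r_big eq] unfolding unit_spine_book_def by blast
  note sub = nbhd_subset_if_far[OF u xu w]
  have "E a' b'" using book' ab' by blast
  then have "a' = a \<or> a' = b \<or> b' = a \<or> b' = b" using book sub ab' by blast
  then obtain c c' where c: "c \<in> nbhd w" "c \<in> {a, b}" "c' \<in> {a, b}" "c' \<noteq> c"
    using ab' ab(3) by blast
  have "card {a, b} < card (nbhd w)" using card_nbhd_ge_7[OF wn xw] by (simp add: card_insert_if)
  then obtain t where t: "t \<in> nbhd w" "t \<notin> {a, b}" by (meson finite.emptyI finite.insertI card_mono not_le subsetI)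
  have "card {a, b, t} < card (nbhd u)"
    using card_nbhd_ge_7[OF u xu] card_length[of "[a, b, t]"] by simp
  then obtain t1 where t1: "t1 \<in> nbhd u" "t1 \<notin> {a, b, t}" by (meson finite.emptyI finite.insertI card_mono not_le subsetI)
  have "card {a, b, t, t1} < card (nbhd u)"
    using card_nbhd_ge_7[OF u xu] card_length[of "[a, b, t, t1]"] by simp
  then obtain t2 where t2: "t2 \<in> nbhd u" "t2 \<notin> {a, b, t, t1}" by (meson finite.emptyI finite.insertI card_mono not_le subsetI)
  have tN: "t \<in> nbhd u" and cN: "c \<in> nbhd u" "c' \<in> nbhd u" using sub t(1) c ab by auto
  have "u \<notin> nbhd u" "w \<notin> nbhd u" using w edge_irrefl by (auto simp: mem_nbhd mem_far)
  then have dist: "distinct [c, w, t, u, t1, c', t2]"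
    using c t t1 t2 tN cN w by (auto simp: mem_far)
  have "E c w" "E w t" using c(1) t(1) edge_sym by (auto simp: mem_nbhd)
  moreover have "E c t" "E c t1" "E c c'" "E c t2" "E c' t2"
    using book cN tN t1 t2 c t by auto
  moreover have "E c u" "E u t1" using cN t1 edge_sym by (auto simp: mem_nbhd)
  moreover have "c < n" "t < n" "t1 < n" "c' < n" "t2 < n" using cN tN t1 t2 by (auto simp: mem_nbhd)
  ultimately show False
    using F_free_3_no_three_triangles[OF F3 _ dist] edge_sym u wn by blast
qed


lemma K3_join_at_of_extremal:
  assumes u: "u < n" and xu: "x u = 1"
  shows "\<exists>a b. K3_join_at u a b"
proof -
  obtain a b where ab: "a \<in> nbhd u" "b \<in> nbhd u" "a \<noteq> b"
    and book: "\<forall>v\<in>nbhd u. \<forall>w\<in>nbhd u. E v w \<longleftrightarrow> v \<noteq> w \<and> (v = a \<or> v = b \<or> w = a \<or> w = b)"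
    using extremal_unit_spine_book[OF F3 u xu r_big eq] unfolding unit_spine_book_def by blast
  have outside: "\<not> E i j" if "i \<notin> insert u (nbhd u)" for i j
  proof
    assume e: "E i j"
    then have i: "i \<in> far u" using that edge_less by (auto simp: mem_far mem_nbhd)
    have "j \<noteq> u" using e that edge_less edge_sym by (auto simp: mem_nbhd)
    moreover have "j \<notin> nbhd u" using no_edge_nbhd_far[OF u xu _ i] e edge_sym by blast
    ultimately have "j \<in> far u" using e edge_less by (auto simp: mem_far mem_nbhd)
    then show False using extremal_far_independent[OF F3 u xu r_big eq i] e by blast
  qed
  have "E i j \<longleftrightarrow> i \<in> insert u (nbhd u) \<and> j \<in> insert u (nbhd u) \<and> i \<noteq> j \<and>
      (i \<in> {u, a, b} \<or> j \<in> {u, a, b})" for i j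
  proof (cases "i \<in> insert u (nbhd u) \<and> j \<in> insert u (nbhd u)")
    case True
    have "u \<notin> nbhd u" using edge_irrefl by (simp add: mem_nbhd)
    from True consider "i = u" "j = u" | "i = u" "j \<in> nbhd u" | "i \<in> nbhd u" "j = u"
      | "i \<in> nbhd u" "j \<in> nbhd u" by blast
    then show ?thesis
    proof cases
      case 1 then show ?thesis using edge_irrefl by simp
    next
      case 2 then show ?thesis using \<open>u \<notin> nbhd u\<close> by (auto simp: mem_nbhd)
    next
      case 3 then show ?thesis using \<open>u \<notin> nbhd u\<close> edge_sym by (auto simp: mem_nbhd)
    next
      case 4
      then have "i \<noteq> u" "j \<noteq> u" using \<open>u \<notin> nbhd u\<close> by auto
      then show ?thesis using book 4 by auto
    qed
  next
    case False
    then show ?thesis using outside edge_sym by blast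
  qed
  then show ?thesis unfolding K3_join_at_def using ab by blast
qed

end

end


lemma K3_join_atD:
  assumes "K3_join_at u a b"
  shows "a \<in> nbhd u" "b \<in> nbhd u" "a \<noteq> b" "u \<notin> nbhd u"
    and "v \<in> nbhd u \<Longrightarrow> w \<in> nbhd u \<Longrightarrow> E v w \<longleftrightarrow> v \<noteq> w \<and> (v \<in> {a, b} \<or> w \<in> {a, b})"
    and "v \<notin> insert u (nbhd u) \<Longrightarrow> \<not> E v w \<and> \<not> E w v"
proof -
  have chr: "E i j \<longleftrightarrow> i \<in> insert u (nbhd u) \<and> j \<in> insert u (nbhd u) \<and> i \<noteq> j \<and>
      (i \<in> {u, a, b} \<or> j \<in> {u, a, b})" for i j
    using assms unfolding K3_join_at_def by blast
  show "a \<in> nbhd u" "b \<in> nbhd u" "a \<noteq> b" using assms unfolding K3_join_at_def by blast+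
  show u: "u \<notin> nbhd u" using edge_irrefl by (simp add: mem_nbhd)
  show "v \<in> nbhd u \<Longrightarrow> w \<in> nbhd u \<Longrightarrow> E v w \<longleftrightarrow> v \<noteq> w \<and> (v \<in> {a, b} \<or> w \<in> {a, b})"
    using chr[of v w] u by auto
  show "v \<notin> insert u (nbhd u) \<Longrightarrow> \<not> E v w \<and> \<not> E w v"
    using chr[of v w] chr[of w v] by blast
qed

lemma num_edges_of_K3_join_at:
  assumes u: "u < n" and K: "K3_join_at u a b"
  shows "real (num_edges n E) = 3 * real (card (nbhd u)) - 3"
proof -
  note K = K3_join_atD[OF K]
  define d where "d = real (card (nbhd u))"
  have "2 \<le> card (nbhd u)"
    using card_mono[of "nbhd u" "{a, b}"] K(1-3) by auto
  then have d_ge_2: "2 \<le> d" unfolding d_def by linarith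
  have far: "\<not> E v w" "\<not> E w v" if "w \<in> far u" for v w
    using K(6)[of w v] that by (auto simp: mem_far mem_nbhd)
  have deg_spine: "(\<Sum>w\<in>nbhd u. adj_real E v w) = d - 1" if v: "v \<in> {a, b}" for v
  proof -
    have vN: "v \<in> nbhd u" using v K(1,2) by auto
    have "(\<Sum>w\<in>nbhd u. adj_real E v w) = (\<Sum>w\<in>nbhd u. if w \<noteq> v then 1 else 0)"
      unfolding adj_real_def using K(5)[OF vN] v by (intro sum.cong) auto
    also have "\<dots> = real (card (nbhd u - {v}))"
    proof -
      have "nbhd u \<inter> {w. w \<noteq> v} = nbhd u - {v}" by auto
      then show ?thesis by (simp add: sum.If_cases)
    qed
    finally show ?thesis using vN d_ge_2 unfolding d_def by (simp add: of_nat_diff)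
  qed
  have deg_page: "(\<Sum>w\<in>nbhd u. adj_real E v w) = 2" if v: "v \<in> nbhd u - {a, b}" for v
  proof -
    have "(\<Sum>w\<in>nbhd u. adj_real E v w) = (\<Sum>w\<in>nbhd u. if w \<in> {a, b} then 1 else 0)"
      unfolding adj_real_def using K(5) v by (intro sum.cong) auto
    also have "\<dots> = real (card (nbhd u \<inter> {a, b}))" by (simp add: sum.If_cases Int_def)
    also have "nbhd u \<inter> {a, b} = {a, b}" using K(1,2) by auto
    finally show ?thesis using K(3) by simp
  qed
  have "(\<Sum>v\<in>nbhd u. \<Sum>w\<in>nbhd u. adj_real E v w) =
      (\<Sum>v\<in>{a, b}. \<Sum>w\<in>nbhd u. adj_real E v w) + (\<Sum>v\<in>nbhd u - {a, b}. \<Sum>w\<in>nbhd u. adj_real E v w)"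
    using sum.subset_diff[of "{a, b}" "nbhd u"] K(1,2) by (simp add: add.commute)
  also have "\<dots> = 2 * (d - 1) + 2 * (d - 2)"
    using deg_spine deg_page K(1-3) card_Diff_subset[of "{a, b}" "nbhd u"] d_ge_2
    by (simp add: d_def of_nat_diff)
  finally have "(\<Sum>v\<in>nbhd u. \<Sum>w\<in>nbhd u. adj_real E v w) = 4 * d - 6" by simp
  moreover have "(\<Sum>v\<in>nbhd u. \<Sum>w\<in>far u. adj_real E v w) = 0" "(\<Sum>v\<in>far u. \<Sum>w\<in>far u. adj_real E v w) = 0"
    using far by (simp_all add: adj_real_def)
  ultimately show ?thesis using twice_num_edges_split[OF u] unfolding d_def by simp
qed


lemma non_isolated_of_K3_join_at:
  assumes u: "u < n" and K: "K3_join_at u a b"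
  shows "non_isolated n E = insert u (nbhd u)"
proof
  note K = K3_join_atD[OF K]
  show "non_isolated n E \<subseteq> insert u (nbhd u)"
    using K(6) unfolding non_isolated_def by blast
  show "insert u (nbhd u) \<subseteq> non_isolated n E"
    using u K(1) edge_sym unfolding non_isolated_def by (auto simp: mem_nbhd)
qed

lemma iso_up_to_isolated_of_K3_join_at:
  assumes u: "u < n" and K: "K3_join_at u a b" and t: "t = card (nbhd u) - 2"
  shows "iso_up_to_isolated n E (t + 3) (K3_join_edge t)"
proof -
  note KD = K3_join_atD[OF K]
  define T where "T = nbhd u - {a, b}"
  have V: "insert u (nbhd u) = insert u (insert a (insert b T))" using KD(1,2) unfolding T_def by auto
  have "card T = t" unfolding T_def t using KD(1-3) by (simp add: card_Diff_subset)
  moreover have "distinct [u, a, b]" "u \<notin> T" "a \<notin> T" "b \<notin> T" using KD unfolding T_def by auto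
  ultimately obtain f where f: "bij_betw f (insert u (nbhd u)) {..<t + 3}"
    and f3: "f u = 0" "f a = 1" "f b = 2" "\<forall>i\<in>T. 3 \<le> f i"
    using bij_betw_three_first[of T u a b] unfolding V T_def by auto
  have "E i j \<longleftrightarrow> K3_join_edge t (f i) (f j)" if "i \<in> insert u (nbhd u)" "j \<in> insert u (nbhd u)" for i j
  proof -
    have "f k < 3 \<longleftrightarrow> k \<in> {u, a, b}" if "k \<in> insert u (nbhd u)" for k
      using that f3 unfolding V by auto
    moreover have "E i j \<longleftrightarrow> i \<noteq> j \<and> (i \<in> {u, a, b} \<or> j \<in> {u, a, b})"
      using K that unfolding K3_join_at_def by blast
    moreover have "f i < t + 3" "f j < t + 3" using f that by (auto simp: bij_betw_def)
    moreover have "f i = f j \<longleftrightarrow> i = j" using inj_on_eq_iff[OF bij_betw_imp_inj_on[OF f] that] .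
    ultimately show ?thesis using that unfolding K3_join_edge_def by auto
  qed
  then show ?thesis using f unfolding iso_up_to_isolated_def non_isolated_of_K3_join_at[OF u K]
    non_isolated_K3_join_edge by auto
qed

lemma graph_spectral_radius_ge_of_iso:
  assumes n: "n > 0" and iso: "iso_up_to_isolated n E (t + 3) (K3_join_edge t)"
  shows "1 + sqrt (3 * real t + 1) \<le> graph_spectral_radius n E"
proof -
  define V where "V = non_isolated n E"
  obtain f where f: "bij_betw f V {..<t + 3}"
    and fe: "\<forall>i\<in>V. \<forall>j\<in>V. E i j \<longleftrightarrow> K3_join_edge t (f i) (f j)"
    using iso unfolding iso_up_to_isolated_def non_isolated_K3_join_edge V_def by blast
  have V: "V \<subseteq> {..<n}" unfolding V_def non_isolated_def by auto
  define L where "L = 1 + sqrt (3 * real t + 1)"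
  have L: "L > 0" "L * L = 2 * L + 3 * real t"
    unfolding L_def by (auto simp: algebra_simps add_pos_nonneg)
  define v where "v i = (if i \<in> V then (if f i < 3 then 1 else 3 / L) else 0)" for i
  have "\<forall>i<n. (\<Sum>j<n. adj_real E i j * v j) = L * v i"
  proof (intro allI impI)
    fix i assume i: "i < n"
    show "(\<Sum>j<n. adj_real E i j * v j) = L * v i"
    proof (cases "i \<in> V")
      case False
      then have "\<forall>j<n. \<not> E i j" using i unfolding V_def non_isolated_def by auto
      then show ?thesis using False by (simp add: adj_real_def v_def)
    next
      case True
      have "(\<Sum>j<n. adj_real E i j * v j) = (\<Sum>j\<in>V. adj_real E i j * v j)"
        by (rule sum.mono_neutral_right) (use V in \<open>auto simp: v_def\<close>)
      also have "\<dots> = (\<Sum>j\<in>V. (if K3_join_edge t (f i) (f j) then 1 else 0) * (if f j < 3 then 1 else 3 / L))"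
        using fe True unfolding v_def adj_real_def by (intro sum.cong refl) auto
      also have "\<dots> = (\<Sum>k<t + 3. (if K3_join_edge t (f i) k then 1 else 0) * (if k < 3 then 1 else 3 / L))"
        using sum.reindex_bij_betw[OF f] .
      also have "\<dots> = L * v i"
      proof -
        have "f i < t + 3" using f True unfolding bij_betw_def by auto
        from K3_join_edge_eigenvector[OF L this] show ?thesis using True unfolding v_def by simp
      qed
      finally show ?thesis .
    qed
  qed
  moreover have "\<exists>i<n. v i \<noteq> 0"
  proof -
    obtain i where "i \<in> V" "f i = 0" using f unfolding bij_betw_def by force
    then show ?thesis using V unfolding v_def by (intro exI[of _ i]) auto
  qed
  ultimately have "\<bar>L\<bar> \<le> graph_spectral_radius n E"
    unfolding graph_spectral_radius_eq using eigenvalue_abs_le_spectral_radius[OF n] by blast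
  then show ?thesis using L unfolding L_def by simp
qed

lemma normalized_perron_vector:
  assumes n: "n > 0"
  obtains x u where "u < n" "x u = 1" "\<forall>i<n. 0 \<le> x i \<and> x i \<le> 1"
    "\<forall>i<n. (\<Sum>j<n. adj_real E i j * x j) = graph_spectral_radius n E * x i"
proof -
  interpret nonneg_sym_real_mat n "adj_real E" using nonneg_sym_real_mat[OF n] .
  obtain v where v0: "\<forall>i. 0 \<le> v i" and "\<exists>i<n. v i \<noteq> 0"
    and v: "\<forall>i<n. (\<Sum>j<n. adj_real E i j * v j) = graph_spectral_radius n E * v i"
    using perron_vector unfolding graph_spectral_radius_eq by blast
  have "Max (v ` {..<n}) \<in> v ` {..<n}" using n by (intro Max_in) auto
  then obtain u where u: "u < n" "v u = Max (v ` {..<n})" by auto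
  have le: "v i \<le> v u" if "i < n" for i unfolding u(2) using that by (intro Max_ge) auto
  obtain i where i: "i < n" "v i \<noteq> 0" using \<open>\<exists>i<n. v i \<noteq> 0\<close> by blast
  then have "0 < v i" using v0 by (simp add: order_less_le)
  then have pos: "0 < v u" using le[OF i(1)] by linarith
  show ?thesis
  proof (rule that[of u "\<lambda>i. v i / v u"])
    show "\<forall>i<n. (\<Sum>j<n. adj_real E i j * (v j / v u)) = graph_spectral_radius n E * (v i / v u)"
      using v by (simp add: sum_divide_distrib[symmetric])
    show "\<forall>i<n. 0 \<le> v i / v u \<and> v i / v u \<le> 1" using le pos v0 by simp
  qed (use u pos in auto)
qed


lemma n_pos_of_num_edges:
  assumes "num_edges n E > 0"
  shows "n > 0"
proof (rule ccontr)
  assume "\<not> n > 0"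
  then have no_edges: "{{i, j} | i j. i < n \<and> j < n \<and> E i j} = {}" by auto
  show False using assms unfolding num_edges_def no_edges by simp
qed

lemma radius_bound_at_perron_vertex:
  assumes F3: "F_free 3 n E" and m: "33 \<le> num_edges n E" and big: "13 / 2 < graph_spectral_radius n E"
  defines "r \<equiv> graph_spectral_radius n E"
  shows "r\<^sup>2 - 2 * r \<le> real (num_edges n E) - 3"
    and "r\<^sup>2 - 2 * r = real (num_edges n E) - 3 \<Longrightarrow> \<exists>u a b. u < n \<and> K3_join_at u a b"
proof -
  have "n > 0" using m by (intro n_pos_of_num_edges) simp
  then obtain x u where u: "u < n" "x u = 1" and x: "\<forall>i<n. 0 \<le> x i \<and> x i \<le> 1"
    "\<forall>i<n. (\<Sum>j<n. adj_real E i j * x j) = r * x i"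
    unfolding r_def by (rule normalized_perron_vector)
  show "r\<^sup>2 - 2 * r \<le> real (num_edges n E) - 3"
    using radius_bound[OF x F3 u] big unfolding r_def by blast
  show "\<exists>u a b. u < n \<and> K3_join_at u a b" if "r\<^sup>2 - 2 * r = real (num_edges n E) - 3"
    using K3_join_at_of_extremal[OF x F3 _ that u] big u unfolding r_def by blast
qed

lemma graph_spectral_radius_le:
  assumes F3: "F_free 3 n E" and m: "33 \<le> num_edges n E"
  shows "graph_spectral_radius n E \<le> 1 + sqrt (real (num_edges n E) - 2)"
proof (cases "13 / 2 < graph_spectral_radius n E")
  case True
  then have "(graph_spectral_radius n E - 1)\<^sup>2 \<le> real (num_edges n E) - 2"
    using radius_bound_at_perron_vertex(1)[OF F3 m] by (simp add: power2_eq_square algebra_simps)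
  then have "\<bar>graph_spectral_radius n E - 1\<bar> \<le> sqrt (real (num_edges n E) - 2)"
    using real_sqrt_le_mono by fastforce
  then show ?thesis by linarith
next
  case False
  moreover have "(11 / 2) \<^sup>2 < real (num_edges n E) - 2" using m by (simp add: power2_eq_square)
  ultimately show ?thesis using real_less_rsqrt by fastforce
qed

lemma K3_join_of_graph_spectral_radius_eq:
  assumes F3: "F_free 3 n E" and m: "33 \<le> num_edges n E"
    and eq: "graph_spectral_radius n E = 1 + sqrt (real (num_edges n E) - 2)"
  defines "t \<equiv> (num_edges n E - 3) div 3"
  shows "3 dvd num_edges n E \<and> iso_up_to_isolated n E (t + 3) (K3_join_edge t)"
proof -
  have "(11 / 2) \<^sup>2 < real (num_edges n E) - 2" using m by (simp add: power2_eq_square)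
  then have "13 / 2 < graph_spectral_radius n E" using eq real_less_rsqrt by fastforce
  moreover have "(graph_spectral_radius n E)\<^sup>2 - 2 * graph_spectral_radius n E = real (num_edges n E) - 3"
    using eq m by (simp add: power2_eq_square algebra_simps)
  ultimately obtain u a b where u: "u < n" and K: "K3_join_at u a b"
    using radius_bound_at_perron_vertex(2)[OF F3 m] by blast
  have "real (num_edges n E) = 3 * real (card (nbhd u)) - 3" using num_edges_of_K3_join_at[OF u K] .
  then have "num_edges n E + 3 = 3 * card (nbhd u)" by linarith
  then have "t = card (nbhd u) - 2" "3 dvd num_edges n E" unfolding t_def using m by simp_all presburger
  then show ?thesis using iso_up_to_isolated_of_K3_join_at[OF u K] by simp
qed

lemma graph_spectral_radius_ge_of_iso_num_edges:
  assumes "n > 0" and "3 dvd m" and "3 \<le> m"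
    and "iso_up_to_isolated n E ((m - 3) div 3 + 3) (K3_join_edge ((m - 3) div 3))"
  shows "1 + sqrt (real m - 2) \<le> graph_spectral_radius n E"
proof -
  have "m = 3 * ((m - 3) div 3) + 3" using assms(2,3) by presburger
  then have "real m - 2 = 3 * real ((m - 3) div 3) + 1" using arg_cong[of _ _ real] by fastforce
  then show ?thesis using graph_spectral_radius_ge_of_iso[OF assms(1,4)] by (simp only:)
qed

end

theorem theorem1p5:
  fixes n m :: nat and E :: "nat \<Rightarrow> nat \<Rightarrow> bool"
  assumes "simple_graph n E"
    and "F_free 3 n E"
    and "num_edges n E = m"
    and "m \<ge> 33"
  shows "graph_spectral_radius n E \<le> 1 + sqrt (real m - 2) \<and>
         (graph_spectral_radius n E = 1 + sqrt (real m - 2) \<longleftrightarrow>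
           3 dvd m \<and> iso_up_to_isolated n E ((m - 3) div 3 + 3) (K3_join_edge ((m - 3) div 3)))"
proof -
  interpret finite_graph n E using assms(1) by unfold_locales
  have "n > 0" using assms(3,4) by (intro n_pos_of_num_edges) simp
  have upper: "graph_spectral_radius n E \<le> 1 + sqrt (real m - 2)"
    using graph_spectral_radius_le[OF assms(2)] assms(3,4) by simp
  moreover have "3 dvd m \<and> iso_up_to_isolated n E ((m - 3) div 3 + 3) (K3_join_edge ((m - 3) div 3))"
    if "graph_spectral_radius n E = 1 + sqrt (real m - 2)"
    using K3_join_of_graph_spectral_radius_eq[OF assms(2)] that assms(3,4) by simp
  moreover have "graph_spectral_radius n E = 1 + sqrt (real m - 2)"
    if "3 dvd m" "iso_up_to_isolated n E ((m - 3) div 3 + 3) (K3_join_edge ((m - 3) div 3))"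
    using graph_spectral_radius_ge_of_iso_num_edges[OF \<open>n > 0\<close> that(1) _ that(2)] upper assms(4) by simp
  ultimately show ?thesis by blast
qed

end
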